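(* Let $\tau$ be a nonzero integer, $m\geq1$, and $R=\mathbb{Q}[q^{\pm1/2},a^{\pm1/2}]$. With $g_m(q,a)$ as defined in the context, \[ \{m\}\{m\tau\}\,g_m(q,a)=\sum_{d\mid m}\ \sum_{|\nu|=m/d}\frac{\mu(d)(-1)^{m\tau/d}}{\mathfrak{z}_\nu}\,\frac{\{m\nu\tau\}}{\{d\nu\}}\,\{d\nu\}_a, \] and this element of $R$ is divisible in $R$ by $\{m\tau\}\{m\}/\{1\}^2$.
   Context: $\{n\}_x=x^{n/2}-x^{-n/2}$, $\{n\}=\{n\}_q$; for a partition $\nu=(\nu_1,\dots,\nu_\ell)$ and integer $c$, $\{c\nu\}_x=\prod_i\{c\nu_i\}_x$, $\{c\nu\}=\{c\nu\}_q$, $\{m\nu\tau\}=\prod_i\{m\nu_i\tau\}$, and $\frac{\{m\nu\tau\}}{\{d\nu\}}=\prod_i\frac{\{m\nu_i\tau\}}{\{d\nu_i\}}$. $\mathfrak{z}_\nu=\prod_j j^{k_j}k_j!$ with $k_j$ the number of parts equal to $j$; $\mu$ is the Möbius function. $\mathcal{Z}_m(q,a)=(-1)^{m\tau}\sum_{|\nu|=m}\frac{1}{\mathfrak{z}_\nu}\frac{\{m\nu\tau\}}{\{m\}\{m\tau\}}\frac{\{\nu\}_a}{\{\nu\}}$ and $g_m(q,a)=\sum_{d\mid m}\mu(d)\mathcal{Z}_{m/d}(q^d,a^d)$. *)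

theory Defs
  imports "HOL-Computational_Algebra.Computational_Algebra" "HOL-Library.Multiset"
begin

text \<open>We work in the field of rational functions K = Frac(Q[x,y]), realised as
  the fraction field of bivariate polynomials (rat poly poly), where
  x = q^(1/2) and y = a^(1/2).  The ring R = Q[q^(+-1/2), a^(+-1/2)] is the
  subring Q[x,y][1/(xy)] of K.\<close>

type_synonym rf = "rat poly poly fract"

definition emb :: "rat poly poly \<Rightarrow> rf" where
  "emb P = Fract P 1"

text \<open>qh = q^(1/2) (the inner variable), ah = a^(1/2) (the outer variable).\<close>
definition qh :: rf where "qh = emb [:[:0, 1:]:]"
definition ah :: rf where "ah = emb [:0, 1:]"

text \<open>br n s = {n}_{s^2} = s^n - s^(-n); so {n} = br n qh and {n}_a = br n ah,
  and {n}_{x^d} = br n (s^d) when s is the square root of x.\<close>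
definition br :: "int \<Rightarrow> rf \<Rightarrow> rf" where
  "br n s = s powi n - s powi (- n)"

definition partitions :: "nat \<Rightarrow> nat multiset set" where
  "partitions n = {\<nu>. (\<forall>i\<in>#\<nu>. 0 < i) \<and> sum_mset \<nu> = n}"

definition zee :: "nat multiset \<Rightarrow> nat" where
  "zee \<nu> = (\<Prod>j\<in>set_mset \<nu>. j ^ count \<nu> j * fact (count \<nu> j))"

definition mobius :: "nat \<Rightarrow> int" where
  "mobius d = (if squarefree d then (-1) ^ card (prime_factors d) else 0)"

text \<open>Zf tau m s t = Z_m(s^2, t^2) (with parameter tau).\<close>
definition Zf :: "int \<Rightarrow> nat \<Rightarrow> rf \<Rightarrow> rf \<Rightarrow> rf" where
  "Zf \<tau> m s t = (-1) powi (int m * \<tau>) *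
     (\<Sum>\<nu>\<in>partitions m. (1 / of_nat (zee \<nu>)) *
        ((\<Prod>i\<in>#\<nu>. br (int m * int i * \<tau>) s) / (br (int m) s * br (int m * \<tau>) s)) *
        (\<Prod>i\<in>#\<nu>. br (int i) t / br (int i) s))"

text \<open>gf tau m s t = g_m(s^2, t^2) = sum over d | m of mu(d) Z_{m/d}(q^d, a^d).\<close>
definition gf :: "int \<Rightarrow> nat \<Rightarrow> rf \<Rightarrow> rf \<Rightarrow> rf" where
  "gf \<tau> m s t = (\<Sum>d\<in>{d. d dvd m}. of_int (mobius d) * Zf \<tau> (m div d) (s ^ d) (t ^ d))"

definition in_R :: "rf \<Rightarrow> bool" where
  "in_R z \<longleftrightarrow> (\<exists>P k. z = emb P / (qh * ah) ^ k)"

end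

theory Submission
  imports Defs
begin

text \<open>The identity is a rearrangement of the definition of g_m.  For divisibility, write
  {r B}/{B} = [r]_(q^(B/2)) with the quantum integer [n]_u = u^(n-1) + u^(n-3) + ... + u^(1-n),
  so that the sum S lies in R.  Up to a unit, {m tau}{m}/{1}^2 is P_m P_T with T = m |tau| and
  P_n = (q^n - 1)/(q - 1), which has simple roots; so it suffices that S, as a polynomial in
  a^(1/2) over Q[q^(1/2)], vanishes at the roots x = q^(1/2) of P_T and doubly at those of P_m.
  If x^(2T) = 1 \<noteq> x^(2m), every summand has a factor [m tau/d]_(x^(d nu_i)) with
  x^(2 d nu_i) \<noteq> 1, which vanishes.  If x^(2m) = 1 \<noteq> x^2, such bad factors never occur
  exactly once (the parts sum to m/d), so summands with bad factors vanish to second order,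
  while the remaining good summands are constant to first order and cancel in the Moebius sum:
  for a prime p dividing the order of x^2, the good partitions of m/d for p not dividing d are
  exactly p times the good partitions of m/(d p), with the same weights.\<close>

section \<open>Brackets and quantum integers\<close>

definition bracket :: "int \<Rightarrow> 'a::field \<Rightarrow> 'a" where
  "bracket n s = s powi n - s powi (- n)"

lemma br_eq_bracket: "br = bracket"
  by (simp add: fun_eq_iff br_def bracket_def)

lemma bracket_power: "(s::'a::field) \<noteq> 0 \<Longrightarrow> bracket n (s ^ d) = bracket (n * int d) s"
  by (simp add: bracket_def power_int_power mult.commute)

lemma bracket_eq_0_iff: "(s::'a::field) \<noteq> 0 \<Longrightarrow> bracket n s = 0 \<longleftrightarrow> s powi (2 * n) = 1"
proof -
  assume s: "s \<noteq> 0"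
  have "bracket n s = 0 \<longleftrightarrow> s powi n = inverse (s powi n)"
    unfolding bracket_def power_int_minus by (rule right_minus_eq)
  also have "\<dots> \<longleftrightarrow> s powi n * s powi n = s powi n * inverse (s powi n)"
    using s by (simp only: mult_cancel_left power_int_eq_0_iff) simp
  also have "s powi n * inverse (s powi n) = 1" using s by simp
  also have "s powi n * s powi n = s powi (2 * n)" by (subst mult_2, subst power_int_add) (use s in auto)
  finally show ?thesis .
qed

definition qint :: "nat \<Rightarrow> 'a::field \<Rightarrow> 'a" where
  "qint n u = (\<Sum>j<n. u powi (int n - 1 - 2 * int j))"

lemma qint_Suc: "(u::'a::field) \<noteq> 0 \<Longrightarrow> qint (Suc n) u = u * qint n u + u powi (- int n)"
proof -
  assume u: "u \<noteq> 0"
  have "qint (Suc n) u = (\<Sum>j<n. u powi (int n - 2 * int j)) + u powi (- int n)"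
    unfolding qint_def by (simp add: algebra_simps)
  also have "(\<Sum>j<n. u powi (int n - 2 * int j)) = u * qint n u"
    unfolding qint_def sum_distrib_left
    by (rule sum.cong) (auto simp: u simp flip: power_int_add_1' intro!: arg_cong[where f="power_int u"])
  finally show ?thesis .
qed

lemma qint_mult_bracket1:
  "(u::'a::field) \<noteq> 0 \<Longrightarrow> qint n u * (u - inverse u) = u powi int n - u powi (- int n)"
proof (induction n)
  case (Suc n)
  have "qint (Suc n) u * (u - inverse u)
      = u * (qint n u * (u - inverse u)) + u powi (- int n) * (u - inverse u)"
    using Suc.prems by (simp add: qint_Suc algebra_simps)
  also have "\<dots> = u * (u ^ n - inverse (u ^ n)) + inverse (u ^ n) * (u - inverse u)"
    using Suc by (simp add: power_int_minus)
  also have "\<dots> = u ^ Suc n - inverse (u ^ Suc n)"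
    using Suc.prems by (simp add: field_simps)
  also have "\<dots> = u powi int (Suc n) - u powi (- int (Suc n))"
    by (simp only: power_int_minus power_int_of_nat)
  finally show ?case .
qed (simp add: qint_def)

definition qint_int :: "int \<Rightarrow> 'a::field \<Rightarrow> 'a" where
  "qint_int r u = (if 0 \<le> r then qint (nat r) u else - qint (nat (- r)) u)"

lemma bracket_mult_eq_qint_int:
  "(s::'a::field) \<noteq> 0 \<Longrightarrow> bracket (r * B) s = qint_int r (s powi B) * bracket B s"
proof -
  assume s: "s \<noteq> 0"
  define u where "u = s powi B"
  have u: "u \<noteq> 0" using s by (simp add: u_def)
  have bB: "bracket B s = u - inverse u" by (simp add: bracket_def u_def power_int_minus)
  have brB: "bracket (r * B) s = u powi r - u powi (- r)"
    by (simp add: bracket_def u_def flip: power_int_mult) (simp add: mult.commute)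
  show ?thesis
  proof (cases "0 \<le> r")
    case True
    then show ?thesis using qint_mult_bracket1[OF u, of "nat r"] by (simp add: brB bB qint_int_def u_def)
  next
    case False
    then have "qint_int r u * (u - inverse u) = u powi r - u powi (- r)"
      using qint_mult_bracket1[OF u, of "nat (- r)"] by (simp add: qint_int_def)
    then show ?thesis by (simp add: brB bB u_def)
  qed
qed

lemma emb_mult: "emb (P * Q) = emb P * emb Q" by (simp add: emb_def)
lemma emb_add: "emb (P + Q) = emb P + emb Q" by (simp add: emb_def)
lemma emb_0: "emb 0 = 0" by (simp add: emb_def Zero_fract_def)
lemma emb_1: "emb 1 = 1" by (simp add: emb_def One_fract_def)
lemma emb_inj: "emb P = emb Q \<longleftrightarrow> P = Q" by (simp add: emb_def eq_fract)
lemma emb_eq_0_iff: "emb P = 0 \<longleftrightarrow> P = 0" using emb_inj[of P 0] by (simp add: emb_0)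
lemma emb_power: "emb (P ^ n) = emb P ^ n" by (induction n) (simp_all add: emb_1 emb_mult)

lemma emb_of_int: "emb [:[:of_int n:]:] = of_int n"
proof -
  have "[:[:of_int n:]:] = (of_int n :: rat poly poly)" by (simp add: of_int_poly)
  moreover have "Fract (of_int k) 1 = (of_int k :: rf)" for k
    by (cases k rule: int_cases) (simp_all add: Fract_of_nat_eq minus_fract[symmetric] del: minus_fract of_nat_Suc)
  ultimately show ?thesis by (simp add: emb_def)
qed

lemma qh_nonzero: "qh \<noteq> 0" by (simp add: qh_def emb_eq_0_iff)
lemma ah_nonzero: "ah \<noteq> 0" by (simp add: ah_def emb_eq_0_iff)

lemma qh_power_neq_1: "k > 0 \<Longrightarrow> qh ^ k \<noteq> 1"
proof
  assume k: "k > 0" and e: "qh ^ k = 1"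
  have "[:[:0, 1::rat:]:] ^ k = [:[:0,1:] ^ k:]"
    by (induction k) simp_all
  with e have "[:0, 1::rat:] ^ k = 1"
    by (simp add: qh_def one_pCons flip: emb_power emb_1 add: emb_inj)
  hence "degree ([:0, 1::rat:] ^ k) = 0" by simp
  thus False using k by (simp add: degree_power_eq)
qed

lemma bracket_qh_nonzero: "n \<noteq> 0 \<Longrightarrow> bracket n qh \<noteq> 0"
proof
  assume n: "n \<noteq> 0" and "bracket n qh = 0"
  then have "qh powi (2 * n) = 1" using bracket_eq_0_iff qh_nonzero by blast
  then have "qh powi \<bar>2 * n\<bar> = 1"
    by (cases "n > 0") (simp_all add: abs_if power_int_minus)
  then have "qh ^ nat \<bar>2 * n\<bar> = 1"
    by (simp add: power_int_def)
  then show False using qh_power_neq_1[of "nat \<bar>2 * n\<bar>"] n by simp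
qed

lemma prod_mset_mult_divide_swap:
  fixes f g h :: "'b \<Rightarrow> 'a::field"
  shows "(\<Prod>i\<in>#M. f i) * (\<Prod>i\<in>#M. g i / h i) = (\<Prod>i\<in>#M. f i / h i) * (\<Prod>i\<in>#M. g i)"
  by (simp add: prod_mset.distrib[symmetric] times_divide_eq_right mult.commute)

lemma br_mult_Zf_power_eq:
  fixes \<tau> :: int and m :: nat
  assumes "\<tau> \<noteq> 0" "1 \<le> m" "d dvd m"
  shows "br (int m) qh * br (int m * \<tau>) qh * Zf \<tau> (m div d) (qh ^ d) (ah ^ d) =
           (\<Sum>\<nu>\<in>partitions (m div d). ((-1) powi (int (m div d) * \<tau>) / of_nat (zee \<nu>)) *
              (\<Prod>i\<in>#\<nu>. br (int m * int i * \<tau>) qh / br (int d * int i) qh) *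
              (\<Prod>i\<in>#\<nu>. br (int d * int i) ah))"
proof -
  have mN: "int m = int (m div d) * int d" using assms(3) by (simp flip: of_nat_mult)
  have br_power: "br n (s ^ d) = br (n * int d) s" if "s \<noteq> 0" for n s
    using that by (simp add: br_eq_bracket bracket_power)
  have X: "br (int m) qh \<noteq> 0" and Y: "br (int m * \<tau>) qh \<noteq> 0"
    unfolding br_eq_bracket using assms by (auto intro!: bracket_qh_nonzero)
  have e1: "br (int (m div d) * int i * \<tau> * int d) qh = br (int m * int i * \<tau>) qh" for i
    by (simp add: mN mult_ac)
  have e2: "br (int d * int (m div d)) qh = br (int m) qh"
    and e3: "br (int (m div d) * \<tau> * int d) qh = br (int m * \<tau>) qh"
    by (simp_all add: mN mult_ac)
  have e4: "br (int i * int d) s = br (int d * int i) s" for i s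
    by (simp add: mult.commute)
  show ?thesis
    unfolding Zf_def br_power[OF qh_nonzero] br_power[OF ah_nonzero] sum_distrib_left e1 e2 e3 e4
  proof (rule sum.cong[OF refl])
    fix \<nu> assume "\<nu> \<in> partitions (m div d)"
    show "br (int m) qh * br (int m * \<tau>) qh * ((-1) powi (int (m div d) * \<tau>) *
        (1 / of_nat (zee \<nu>) * ((\<Prod>i\<in>#\<nu>. br (int m * int i * \<tau>) qh) / (br (int m) qh * br (int m * \<tau>) qh)) *
          (\<Prod>i\<in>#\<nu>. br (int d * int i) ah / br (int d * int i) qh))) =
      (-1) powi (int (m div d) * \<tau>) / of_nat (zee \<nu>) *
        (\<Prod>i\<in>#\<nu>. br (int m * int i * \<tau>) qh / br (int d * int i) qh) * (\<Prod>i\<in>#\<nu>. br (int d * int i) ah)"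
      using X Y prod_mset_mult_divide_swap[of "\<lambda>i. br (int m * int i * \<tau>) qh" \<nu>
          "\<lambda>i. br (int d * int i) ah" "\<lambda>i. br (int d * int i) qh"]
      by (simp add: field_simps)
  qed
qed

lemma br_mult_gf_eq:
  fixes \<tau> :: int and m :: nat
  assumes "\<tau> \<noteq> 0" and "1 \<le> m"
  shows "br (int m) qh * br (int m * \<tau>) qh * gf \<tau> m qh ah =
           (\<Sum>d\<in>{d. d dvd m}. \<Sum>\<nu>\<in>partitions (m div d).
              (of_int (mobius d) * (-1) powi (int (m div d) * \<tau>) / of_nat (zee \<nu>)) *
              (\<Prod>i\<in>#\<nu>. br (int m * int i * \<tau>) qh / br (int d * int i) qh) *
              (\<Prod>i\<in>#\<nu>. br (int d * int i) ah))"
  unfolding gf_def sum_distrib_left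
  using br_mult_Zf_power_eq[OF assms]
  by (intro sum.cong refl) (simp add: sum_distrib_left mult_ac)

section \<open>The ring R and complex evaluation\<close>

lemma map_poly_add_hom:
  assumes "\<And>a b. f (a + b) = f a + f b" "f 0 = 0"
  shows "map_poly f (p + q) = map_poly f p + map_poly f q"
  by (simp add: poly_eq_iff coeff_map_poly assms)

lemma map_poly_mult_hom:
  fixes f :: "'a::comm_semiring_0 \<Rightarrow> 'b::comm_semiring_0"
  assumes "\<And>a b. f (a + b) = f a + f b" "\<And>a b. f (a * b) = f a * f b" "f 0 = 0"
  shows "map_poly f (p * q) = map_poly f p * map_poly f q"
proof -
  have "coeff (map_poly f (p * q)) n = coeff (map_poly f p * map_poly f q) n" for n
    by (simp add: coeff_map_poly coeff_mult assms(2,3) flip: sum_comp_morphism[of f, OF assms(3,1)])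
  then show ?thesis by (simp add: poly_eq_iff)
qed

definition complex_poly :: "rat poly \<Rightarrow> complex poly" where
  "complex_poly = map_poly of_rat"

definition complex_poly2 :: "rat poly poly \<Rightarrow> complex poly poly" where
  "complex_poly2 = map_poly complex_poly"

lemma complex_poly_add: "complex_poly (a + b) = complex_poly a + complex_poly b"
  unfolding complex_poly_def by (rule map_poly_add_hom) (simp_all add: of_rat_add)
lemma complex_poly_mult: "complex_poly (a * b) = complex_poly a * complex_poly b"
  unfolding complex_poly_def by (rule map_poly_mult_hom) (simp_all add: of_rat_add of_rat_mult)
lemma complex_poly_0 [simp]: "complex_poly 0 = 0" by (simp add: complex_poly_def)
lemma complex_poly_1 [simp]: "complex_poly 1 = 1" by (simp add: complex_poly_def)
lemma complex_poly_pCons [simp]: "complex_poly (pCons a p) = pCons (of_rat a) (complex_poly p)"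
  by (simp add: complex_poly_def map_poly_pCons)
lemma complex_poly_eq_0_iff: "complex_poly p = 0 \<longleftrightarrow> p = 0"
  unfolding complex_poly_def by (rule map_poly_eq_0_iff) simp_all
lemma degree_complex_poly: "degree (complex_poly p) = degree p"
  unfolding complex_poly_def by (rule degree_map_poly) simp

lemma complex_poly2_add: "complex_poly2 (a + b) = complex_poly2 a + complex_poly2 b"
  unfolding complex_poly2_def by (rule map_poly_add_hom) (simp_all add: complex_poly_add)
lemma complex_poly2_mult: "complex_poly2 (a * b) = complex_poly2 a * complex_poly2 b"
  unfolding complex_poly2_def by (rule map_poly_mult_hom) (simp_all add: complex_poly_add complex_poly_mult)
lemma complex_poly2_0 [simp]: "complex_poly2 0 = 0" by (simp add: complex_poly2_def)
lemma complex_poly2_1 [simp]: "complex_poly2 1 = 1" by (simp add: complex_poly2_def)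
lemma complex_poly2_pCons [simp]: "complex_poly2 (pCons a p) = pCons (complex_poly a) (complex_poly2 p)"
  by (simp add: complex_poly2_def map_poly_pCons)
lemma coeff_complex_poly2: "coeff (complex_poly2 P) j = complex_poly (coeff P j)"
  by (simp add: complex_poly2_def coeff_map_poly)

text \<open>Evaluation of P \<in> Q[x][y] at complex (x, y); the inner variable is x.\<close>
definition eval2 :: "rat poly poly \<Rightarrow> complex \<Rightarrow> complex \<Rightarrow> complex" where
  "eval2 P x y = poly (poly (complex_poly2 P) [:y:]) x"

lemma eval2_add: "eval2 (P + Q) x y = eval2 P x y + eval2 Q x y"
  by (simp add: eval2_def complex_poly2_add)
lemma eval2_mult: "eval2 (P * Q) x y = eval2 P x y * eval2 Q x y"
  by (simp add: eval2_def complex_poly2_mult)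
lemma eval2_1: "eval2 1 x y = 1" by (simp add: eval2_def)
lemma eval2_power: "eval2 (P ^ n) x y = eval2 P x y ^ n"
  by (induction n) (simp_all add: eval2_mult eval2_1)

lemma eval2_altdef: "eval2 P x y = (\<Sum>j\<le>degree (complex_poly2 P). poly (coeff (complex_poly2 P) j) x * y ^ j)"
  unfolding eval2_def by (subst poly_altdef) (simp add: poly_sum poly_const_pow mult.commute)

definition xy_poly :: "rat poly poly" where
  "xy_poly = [:0, [:0, 1:]:]"

lemma eval2_xy_poly: "eval2 xy_poly x y = x * y" by (simp add: eval2_def xy_poly_def)
lemma emb_xy_poly: "emb xy_poly = qh * ah" by (simp add: qh_def ah_def xy_poly_def flip: emb_mult)

text \<open>Transfers statements about elements of R to statements about complex functions.\<close>
definition R_repr :: "rf \<Rightarrow> (complex \<Rightarrow> complex \<Rightarrow> complex) \<Rightarrow> bool" where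
  "R_repr z f \<longleftrightarrow> (\<exists>P k. z = emb P / emb xy_poly ^ k \<and>
     (\<forall>x y. x \<noteq> 0 \<longrightarrow> y \<noteq> 0 \<longrightarrow> f x y = eval2 P x y / (x * y) ^ k))"

lemma R_repr_imp_in_R: "R_repr z f \<Longrightarrow> in_R z"
  unfolding R_repr_def in_R_def emb_xy_poly by blast

lemma R_repr_emb: "R_repr (emb P) (\<lambda>x y. eval2 P x y)"
  unfolding R_repr_def by (rule exI[of _ P], rule exI[of _ 0]) simp

lemma R_repr_add:
  assumes "R_repr a f" "R_repr b g" shows "R_repr (a + b) (\<lambda>x y. f x y + g x y)"
proof -
  obtain P k where a: "a = emb P / emb xy_poly ^ k"
    and f: "\<forall>x y. x \<noteq> 0 \<longrightarrow> y \<noteq> 0 \<longrightarrow> f x y = eval2 P x y / (x * y) ^ k"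
    using assms(1) unfolding R_repr_def by blast
  obtain P' k' where b: "b = emb P' / emb xy_poly ^ k'"
    and g: "\<forall>x y. x \<noteq> 0 \<longrightarrow> y \<noteq> 0 \<longrightarrow> g x y = eval2 P' x y / (x * y) ^ k'"
    using assms(2) unfolding R_repr_def by blast
  have "a + b = emb (P * xy_poly ^ k' + P' * xy_poly ^ k) / emb xy_poly ^ (k + k')"
    using qh_nonzero ah_nonzero
    by (simp add: a b emb_add emb_mult emb_power emb_xy_poly field_simps power_add)
  moreover have "f x y + g x y = eval2 (P * xy_poly ^ k' + P' * xy_poly ^ k) x y / (x * y) ^ (k + k')"
    if "x \<noteq> 0" "y \<noteq> 0" for x y
  proof -
    have "eval2 (P * xy_poly ^ k' + P' * xy_poly ^ k) x y / (x * y) ^ (k + k') =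
        (eval2 P x y * (x * y) ^ k' + eval2 P' x y * (x * y) ^ k) / ((x * y) ^ k * (x * y) ^ k')"
      by (simp add: eval2_add eval2_mult eval2_power eval2_xy_poly power_add)
    also have "\<dots> = eval2 P x y / (x * y) ^ k + eval2 P' x y / (x * y) ^ k'"
      using that by (simp add: field_simps)
    finally show ?thesis using f g that by simp
  qed
  ultimately show ?thesis unfolding R_repr_def by blast
qed

lemma R_repr_mult:
  assumes "R_repr a f" "R_repr b g" shows "R_repr (a * b) (\<lambda>x y. f x y * g x y)"
proof -
  obtain P k where a: "a = emb P / emb xy_poly ^ k"
    and f: "\<forall>x y. x \<noteq> 0 \<longrightarrow> y \<noteq> 0 \<longrightarrow> f x y = eval2 P x y / (x * y) ^ k"
    using assms(1) unfolding R_repr_def by blast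
  obtain P' k' where b: "b = emb P' / emb xy_poly ^ k'"
    and g: "\<forall>x y. x \<noteq> 0 \<longrightarrow> y \<noteq> 0 \<longrightarrow> g x y = eval2 P' x y / (x * y) ^ k'"
    using assms(2) unfolding R_repr_def by blast
  have "a * b = emb (P * P') / emb xy_poly ^ (k + k')"
    by (simp add: a b emb_mult power_add)
  moreover have "f x y * g x y = eval2 (P * P') x y / (x * y) ^ (k + k')" if "x \<noteq> 0" "y \<noteq> 0" for x y
    using f g that by (simp add: eval2_mult power_add)
  ultimately show ?thesis unfolding R_repr_def by blast
qed

lemma R_repr_const: "R_repr (emb [:[:c:]:]) (\<lambda>x y. of_rat c)"
  using R_repr_emb[of "[:[:c:]:]"] by (simp add: eval2_def)

lemma R_repr_of_int: "R_repr (of_int n) (\<lambda>x y. of_int n)"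
  using R_repr_const[of "of_int n"] by (simp add: emb_of_int)

lemma R_repr_inverse_of_nat: "R_repr (1 / of_nat n) (\<lambda>x y. 1 / of_nat n)"
proof -
  have "emb [:[:1 / of_nat n:]:] = 1 / of_nat n"
  proof (cases "n = 0")
    case False
    have "emb [:[:1 / of_nat n:]:] * of_nat n = emb [:[:1 / of_nat n:]:] * emb [:[:of_int (int n):]:]"
      by (simp only: emb_of_int) simp
    also have "\<dots> = emb 1"
      using False by (simp add: one_pCons flip: emb_mult)
    finally show ?thesis using False by (simp add: emb_1 field_simps)
  qed (simp add: emb_0)
  with R_repr_const[of "1 / of_nat n"] show ?thesis by (simp add: of_rat_divide)
qed

lemma R_repr_qh: "R_repr qh (\<lambda>x y. x)"
  using R_repr_emb[of "[:[:0,1:]:]"] by (simp add: eval2_def qh_def)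

lemma R_repr_ah: "R_repr ah (\<lambda>x y. y)"
  using R_repr_emb[of "[:0,1:]"] by (simp add: eval2_def ah_def)

lemma R_repr_inverse_qh: "R_repr (inverse qh) (\<lambda>x y. inverse x)"
proof -
  have "inverse qh = emb [:0,1:] / emb xy_poly ^ 1"
    using ah_nonzero by (simp add: emb_xy_poly inverse_eq_divide flip: ah_def)
  moreover have "inverse x = eval2 [:0,1:] x y / (x * y) ^ 1" if "y \<noteq> 0" for x y :: complex
    using that by (simp add: eval2_def inverse_eq_divide)
  ultimately show ?thesis unfolding R_repr_def by blast
qed

lemma R_repr_inverse_ah: "R_repr (inverse ah) (\<lambda>x y. inverse y)"
proof -
  have "inverse ah = emb [:[:0,1:]:] / emb xy_poly ^ 1"
    using qh_nonzero by (simp add: emb_xy_poly inverse_eq_divide flip: qh_def)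
  moreover have "inverse y = eval2 [:[:0,1:]:] x y / (x * y) ^ 1" if "x \<noteq> 0" for x y :: complex
    using that by (simp add: eval2_def inverse_eq_divide)
  ultimately show ?thesis unfolding R_repr_def by blast
qed

lemma R_repr_0: "R_repr 0 (\<lambda>x y. 0)"
  using R_repr_emb[of 0] by (simp add: emb_0 eval2_def)

lemma R_repr_1: "R_repr 1 (\<lambda>x y. 1)"
  using R_repr_emb[of 1] by (simp add: emb_1 eval2_1)

lemma R_repr_sum:
  assumes "\<And>i. i \<in> A \<Longrightarrow> R_repr (a i) (f i)"
  shows "R_repr (\<Sum>i\<in>A. a i) (\<lambda>x y. \<Sum>i\<in>A. f i x y)"
  using assms
proof (induction A rule: infinite_finite_induct)
  case (insert j A)
  have "R_repr (a j + (\<Sum>i\<in>A. a i)) (\<lambda>x y. f j x y + (\<Sum>i\<in>A. f i x y))"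
    by (rule R_repr_add) (use insert in auto)
  then show ?case using insert by simp
qed (simp_all add: R_repr_0)

lemma R_repr_prod_mset:
  assumes "\<And>i. i \<in># M \<Longrightarrow> R_repr (a i) (f i)"
  shows "R_repr (\<Prod>i\<in>#M. a i) (\<lambda>x y. \<Prod>i\<in>#M. f i x y)"
  using assms
proof (induction M)
  case (add j M)
  have "R_repr (a j * (\<Prod>i\<in>#M. a i)) (\<lambda>x y. f j x y * (\<Prod>i\<in>#M. f i x y))"
    by (rule R_repr_mult) (use add in auto)
  then show ?case by simp
qed (simp add: R_repr_1)

lemma R_repr_power: "R_repr a f \<Longrightarrow> R_repr (a ^ n) (\<lambda>x y. f x y ^ n)"
  by (induction n) (simp_all add: R_repr_1 R_repr_mult)

lemma R_repr_uminus: "R_repr a f \<Longrightarrow> R_repr (- a) (\<lambda>x y. - f x y)"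
  using R_repr_mult[OF R_repr_of_int[of "-1"]] by simp

lemma R_repr_diff: "R_repr a f \<Longrightarrow> R_repr b g \<Longrightarrow> R_repr (a - b) (\<lambda>x y. f x y - g x y)"
  using R_repr_add[OF _ R_repr_uminus] by fastforce

lemma R_repr_qh_powi: "R_repr (qh powi n) (\<lambda>x y. x powi n)"
  using R_repr_power[OF R_repr_qh, of "nat n"] R_repr_power[OF R_repr_inverse_qh, of "nat (-n)"]
  by (simp add: power_int_def)

lemma R_repr_ah_powi: "R_repr (ah powi n) (\<lambda>x y. y powi n)"
  using R_repr_power[OF R_repr_ah, of "nat n"] R_repr_power[OF R_repr_inverse_ah, of "nat (-n)"]
  by (simp add: power_int_def)

lemma R_repr_bracket_ah: "R_repr (bracket n ah) (\<lambda>x y. bracket n y)"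
  unfolding bracket_def by (intro R_repr_diff R_repr_ah_powi)

lemma R_repr_qint_int_qh: "R_repr (qint_int r (qh powi B)) (\<lambda>x y. qint_int r (x powi B))"
proof -
  have "R_repr (qint n (qh powi B)) (\<lambda>x y. qint n (x powi B))" for n
    unfolding qint_def power_int_mult[symmetric] by (intro R_repr_sum R_repr_qh_powi)
  then show ?thesis unfolding qint_int_def by (simp add: R_repr_uminus)
qed

section \<open>Partitions and the quantum integer form of the sum\<close>

lemma size_le_sum_mset: "(\<forall>i\<in>#\<nu>. 0 < (i::nat)) \<Longrightarrow> size \<nu> \<le> sum_mset \<nu>"
  by (induction \<nu>) auto

lemma member_le_sum_mset: "(i::nat) \<in># \<nu> \<Longrightarrow> i \<le> sum_mset \<nu>"
  by (induction \<nu>) auto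

lemma finite_partitions: "finite (partitions n)"
proof -
  have "partitions n \<subseteq> (\<Union>k\<in>{..n}. multisets_of_size {..n} k)"
  proof
    fix \<nu> assume "\<nu> \<in> partitions n"
    then have \<nu>: "\<forall>i\<in>#\<nu>. 0 < i" "sum_mset \<nu> = n" by (auto simp: partitions_def)
    then have "size \<nu> \<le> n" using size_le_sum_mset by metis
    moreover have "set_mset \<nu> \<subseteq> {..n}" using \<nu> member_le_sum_mset by fastforce
    ultimately show "\<nu> \<in> (\<Union>k\<in>{..n}. multisets_of_size {..n} k)"
      by (auto simp: multisets_of_size_def)
  qed
  then show ?thesis by (rule finite_subset) auto
qed

definition rhs_coeff :: "int \<Rightarrow> nat \<Rightarrow> nat \<Rightarrow> nat multiset \<Rightarrow> 'a::field" where
  "rhs_coeff \<tau> m d \<nu> = of_int (mobius d) * (-1) powi (int (m div d) * \<tau>) / of_nat (zee \<nu>)"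

lemma R_repr_rhs_coeff: "R_repr (rhs_coeff \<tau> m d \<nu>) (\<lambda>x y. rhs_coeff \<tau> m d \<nu>)"
proof -
  have sign: "((-1::'a::field) powi k) = of_int ((-1) ^ nat \<bar>k\<bar>)" for k
    by (cases "0 \<le> k") (simp_all add: power_int_def)
  have "R_repr (of_int (mobius d * (-1) ^ nat \<bar>int (m div d) * \<tau>\<bar>) * (1 / of_nat (zee \<nu>)))
      (\<lambda>x y. of_int (mobius d * (-1) ^ nat \<bar>int (m div d) * \<tau>\<bar>) * (1 / of_nat (zee \<nu>)))"
    by (intro R_repr_mult R_repr_of_int R_repr_inverse_of_nat)
  then show ?thesis unfolding rhs_coeff_def sign by simp
qed

text \<open>The right-hand side of the theorem with every quotient {m nu_i tau}/{d nu_i} written as a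
  quantum integer, as a function of x = q^(1/2) and y = a^(1/2) in an arbitrary field.\<close>
definition qint_sum :: "int \<Rightarrow> nat \<Rightarrow> 'a::field \<Rightarrow> 'a \<Rightarrow> 'a" where
  "qint_sum \<tau> m x y = (\<Sum>d\<in>{d. d dvd m}. \<Sum>\<nu>\<in>partitions (m div d).
      rhs_coeff \<tau> m d \<nu> * (\<Prod>i\<in>#\<nu>. qint_int (int (m div d) * \<tau>) (x powi (int d * int i))) *
      (\<Prod>i\<in>#\<nu>. bracket (int d * int i) y))"

lemma R_repr_qint_sum: "R_repr (qint_sum \<tau> m qh ah) (\<lambda>x y. qint_sum \<tau> m x y)"
  unfolding qint_sum_def
  by (intro R_repr_sum R_repr_mult R_repr_rhs_coeff R_repr_prod_mset R_repr_qint_int_qh R_repr_bracket_ah)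

lemma rhs_eq_qint_sum:
  fixes \<tau> :: int and m :: nat
  assumes "1 \<le> m"
  shows "(\<Sum>d\<in>{d. d dvd m}. \<Sum>\<nu>\<in>partitions (m div d).
              (of_int (mobius d) * (-1) powi (int (m div d) * \<tau>) / of_nat (zee \<nu>)) *
              (\<Prod>i\<in>#\<nu>. br (int m * int i * \<tau>) qh / br (int d * int i) qh) *
              (\<Prod>i\<in>#\<nu>. br (int d * int i) ah)) = qint_sum \<tau> m qh ah"
  unfolding qint_sum_def rhs_coeff_def br_eq_bracket
proof (intro sum.cong refl arg_cong2[where f="(*)"] arg_cong[where f=prod_mset] image_mset_cong)
  fix d \<nu> i assume d: "d \<in> {d. d dvd m}" and \<nu>: "\<nu> \<in> partitions (m div d)" and i: "i \<in># \<nu>"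
  have "i > 0" using \<nu> i by (auto simp: partitions_def)
  moreover have "d > 0" using d assms by (auto intro!: Nat.gr0I)
  ultimately have nz: "bracket (int d * int i) qh \<noteq> 0" by (intro bracket_qh_nonzero) simp
  have "int m = int (m div d) * int d" using d by (simp flip: of_nat_mult)
  then have e: "int m * int i * \<tau> = (int (m div d) * \<tau>) * (int d * int i)" by (simp add: mult_ac)
  show "bracket (int m * int i * \<tau>) qh / bracket (int d * int i) qh =
      qint_int (int (m div d) * \<tau>) (qh powi (int d * int i))"
    unfolding e bracket_mult_eq_qint_int[OF qh_nonzero, of "int (m div d) * \<tau>" "int d * int i"]
    using nz by simp
qed

section \<open>Divisibility of polynomials via complex roots\<close>

lemma dvd_if_order_le:
  fixes p q :: "complex poly"
  assumes "p \<noteq> 0" "q \<noteq> 0" "\<And>a. order a p \<le> order a q"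
  shows "p dvd q"
  using assms
proof (induction "degree p" arbitrary: p q rule: less_induct)
  case less
  show ?case
  proof (cases "degree p = 0")
    case True
    then obtain c where "p = [:c:]" by (metis degree_eq_zeroE)
    with less.prems(1) show ?thesis by (simp add: const_poly_dvd_iff dvd_field_iff)
  next
    case False
    then obtain a where a: "poly p a = 0"
      using fundamental_theorem_of_algebra[of p] constant_degree[of p] by auto
    then obtain p1 where p1: "p = [:-a, 1:] * p1" by (metis dvdE poly_eq_0_iff_dvd)
    have "order a p \<noteq> 0" using a less.prems(1) order_root by blast
    then have "poly q a = 0" using less.prems(3)[of a] order_root by fastforce
    then obtain q1 where q1: "q = [:-a, 1:] * q1" by (metis dvdE poly_eq_0_iff_dvd)
    have p1nz: "p1 \<noteq> 0" and q1nz: "q1 \<noteq> 0" using p1 q1 less.prems by auto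
    have "degree p1 < degree p" using p1 p1nz degree_mult_eq[of "[:-a,1:]" p1] by simp
    moreover have "order b p1 \<le> order b q1" for b
      using less.prems order_mult[of "[:-a,1:]" p1 b] order_mult[of "[:-a,1:]" q1 b] p1 q1
      by (metis add_le_cancel_left)
    ultimately have "p1 dvd q1" using less.hyps p1nz q1nz by blast
    then show ?thesis unfolding p1 q1 by (rule mult_dvd_mono[OF dvd_refl])
  qed
qed

lemma complex_poly_dvd_imp_dvd:
  assumes "F \<noteq> 0" "complex_poly F dvd complex_poly G"
  shows "F dvd G"
proof -
  define r where "r = G mod F"
  have "complex_poly G = complex_poly F * complex_poly (G div F) + complex_poly r"
    by (metis complex_poly_add complex_poly_mult div_mult_mod_eq mult.commute r_def)
  then have "complex_poly F dvd complex_poly r" using assms(2) by (metis dvd_add_right_iff dvd_triv_left)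
  have "r = 0"
  proof (rule ccontr)
    assume "r \<noteq> 0"
    then have "degree r < degree F" using degree_mod_less[OF assms(1), of G] by (simp add: r_def)
    moreover have "degree (complex_poly F) \<le> degree (complex_poly r)"
      using \<open>complex_poly F dvd complex_poly r\<close> \<open>r \<noteq> 0\<close> complex_poly_eq_0_iff
      by (intro dvd_imp_degree_le) auto
    ultimately show False by (simp add: degree_complex_poly)
  qed
  then show ?thesis by (simp add: r_def mod_eq_0_iff_dvd)
qed

text \<open>geom2_poly n = (x^(2n) - 1) / (x^2 - 1), the numerator of {n}/{1} up to a power of x.\<close>
definition geom2_poly :: "nat \<Rightarrow> rat poly" where
  "geom2_poly n = (\<Sum>j<n. monom 1 (2 * j))"

lemma geom2_sum_mult: "(\<Sum>j<n. (x::'a::comm_ring_1) ^ (2 * j)) * (x ^ 2 - 1) = x ^ (2 * n) - 1"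
proof (induction n)
  case (Suc n)
  have "(\<Sum>j<Suc n. x ^ (2 * j)) * (x ^ 2 - 1) = x ^ (2 * n) * x ^ 2 - 1"
    using Suc.IH by (simp add: algebra_simps)
  also have "x ^ (2 * n) * x ^ 2 = x ^ (2 * Suc n)" by (simp add: power_add[symmetric])
  finally show ?case .
qed simp

lemma poly_complex_geom2_poly: "poly (complex_poly (geom2_poly n)) x = (\<Sum>j<n. x ^ (2 * j))"
proof -
  have "complex_poly (geom2_poly n) = (\<Sum>j<n. complex_poly (monom 1 (2 * j)))"
    unfolding geom2_poly_def by (simp add: sum_comp_morphism[symmetric] complex_poly_add o_def)
  then show ?thesis by (simp add: poly_sum complex_poly_def map_poly_monom poly_monom)
qed

lemma complex_geom2_poly_nonzero: "n \<ge> 1 \<Longrightarrow> complex_poly (geom2_poly n) \<noteq> 0"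
proof
  assume "n \<ge> 1" "complex_poly (geom2_poly n) = 0"
  then have "poly (complex_poly (geom2_poly n)) 1 = 0" by simp
  then show False using \<open>n \<ge> 1\<close> by (simp add: poly_complex_geom2_poly)
qed

lemma complex_geom2_poly_root:
  assumes "n \<ge> 1" "poly (complex_poly (geom2_poly n)) a = 0"
  shows "a ^ (2 * n) = 1" "a ^ 2 \<noteq> 1"
proof -
  show "a ^ (2 * n) = 1" using geom2_sum_mult[of a n] assms by (simp add: poly_complex_geom2_poly)
  show "a ^ 2 \<noteq> 1"
  proof
    assume "a ^ 2 = 1"
    then have "(\<Sum>j<n. a ^ (2 * j)) = of_nat n" by (simp add: power_mult)
    then show False using assms by (simp add: poly_complex_geom2_poly)
  qed
qed

lemma order_complex_geom2_poly_le_1: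
  assumes "n \<ge> 1"
  shows "order a (complex_poly (geom2_poly n)) \<le> 1"
proof -
  define G :: "complex poly" where "G = monom 1 (2 * n) - 1"
  have pG: "poly G x = x ^ (2 * n) - 1" for x by (simp add: G_def poly_monom)
  have GG: "complex_poly (geom2_poly n) * [:-1, 0, 1:] = G"
  proof (rule poly_eq_poly_eq_iff[THEN iffD1], rule ext)
    fix x :: complex
    have "poly [:-1, 0, 1:] x = x ^ 2 - 1" by (simp add: power2_eq_square)
    then show "poly (complex_poly (geom2_poly n) * [:-1, 0, 1:]) x = poly G x"
      by (simp only: poly_mult poly_complex_geom2_poly geom2_sum_mult pG)
  qed
  have Gnz: "G \<noteq> 0" using pG[of 0] assms by (auto simp: power_0_left)
  have le: "order a (complex_poly (geom2_poly n)) \<le> order a G"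
    using GG Gnz order_mult[of "complex_poly (geom2_poly n)" "[:-1, 0, 1:]" a] by simp
  show ?thesis
  proof (cases "poly G a = 0")
    case False
    then have "poly (complex_poly (geom2_poly n)) a \<noteq> 0" using GG by (metis mult_zero_left poly_mult)
    then show ?thesis by (simp add: order_0I)
  next
    case True
    \<comment> \<open>G = x^(2n) - 1 is separable: its derivative does not vanish at a \<noteq> 0.\<close>
    then have "a \<noteq> 0" using pG[of a] assms by (auto simp: power_0_left)
    then have "poly (pderiv G) a \<noteq> 0" using assms by (simp add: G_def pderiv_monom pderiv_diff poly_monom)
    then have "order a G = 1" using order_pderiv[OF Gnz True] by (simp add: order_0I)
    then show ?thesis using le by simp
  qed
qed

lemma coeffs_eq_0_if_poly_vanishes:
  fixes c :: "nat \<Rightarrow> complex"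
  assumes "\<And>y. y \<noteq> 0 \<Longrightarrow> (\<Sum>j\<le>D. c j * y ^ j) = 0" "j \<le> D"
  shows "c j = 0"
proof -
  define E where "E = (\<Sum>j\<le>D. monom (c j) j)"
  have "E = 0"
  proof (rule ccontr)
    assume "E \<noteq> 0"
    then have "finite {y. poly E y = 0}" by (rule poly_roots_finite)
    moreover have "- {0} \<subseteq> {y. poly E y = 0}"
      using assms(1) by (auto simp: E_def poly_sum poly_monom)
    ultimately have "finite (- {0::complex})" by (rule finite_subset[rotated])
    then show False by (simp add: infinite_UNIV_char_0)
  qed
  then have "coeff E j = 0" by simp
  then show ?thesis using assms(2) by (simp add: E_def coeff_sum coeff_monom)
qed

lemma poly_coeff_eq_0_if_eval2_eq_0:
  assumes "\<And>y. y \<noteq> 0 \<Longrightarrow> eval2 P z y = 0"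
  shows "poly (coeff (complex_poly2 P) j) z = 0"
proof (cases "j \<le> degree (complex_poly2 P)")
  case True
  show ?thesis
    by (rule coeffs_eq_0_if_poly_vanishes[where c="\<lambda>j. poly (coeff (complex_poly2 P) j) z", OF _ True])
       (use assms in \<open>simp add: eval2_altdef\<close>)
qed (simp add: coeff_eq_0)

lemma poly_pderiv_coeff_eq_0_if_deriv_eval2_eq_0:
  assumes "\<And>y. y \<noteq> 0 \<Longrightarrow> ((\<lambda>x. eval2 P x y) has_field_derivative 0) (at z)"
  shows "poly (pderiv (coeff (complex_poly2 P) j)) z = 0"
proof (cases "j \<le> degree (complex_poly2 P)")
  case True
  have "(\<Sum>j\<le>degree (complex_poly2 P). poly (pderiv (coeff (complex_poly2 P) j)) z * y ^ j) = 0"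
    if "y \<noteq> 0" for y
  proof -
    have "((\<lambda>x. eval2 P x y) has_field_derivative
        (\<Sum>j\<le>degree (complex_poly2 P). poly (pderiv (coeff (complex_poly2 P) j)) z * y ^ j)) (at z)"
      unfolding eval2_altdef by (intro DERIV_sum DERIV_cmult_right) auto
    then show ?thesis using assms[OF that] DERIV_unique by blast
  qed
  then show ?thesis
    by (rule coeffs_eq_0_if_poly_vanishes[where c="\<lambda>j. poly (pderiv (coeff (complex_poly2 P) j)) z", OF _ True])
qed (simp add: coeff_eq_0)

lemma order_ge_2_if_double_root:
  fixes q :: "complex poly"
  assumes "q \<noteq> 0" "poly q a = 0" "poly (pderiv q) a = 0"
  shows "order a q \<ge> 2"
proof -
  have "pderiv q \<noteq> 0"
  proof
    assume "pderiv q = 0"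
    then obtain c where "q = [:c:]" by (metis degree_eq_zeroE pderiv_eq_0_iff)
    then show False using assms by simp
  qed
  then have "order a (pderiv q) \<noteq> 0" using assms(3) order_root by blast
  then show ?thesis using order_pderiv[OF assms(1,2)] by simp
qed

lemma order_complex_geom2_prod_le:
  fixes q :: "complex poly"
  assumes m: "m \<ge> 1" and T: "T \<ge> 1" and q: "q \<noteq> 0"
    and simple: "\<And>a. a ^ (2 * T) = 1 \<Longrightarrow> a ^ (2 * m) \<noteq> 1 \<Longrightarrow> poly q a = 0"
    and double: "\<And>a. a ^ (2 * m) = 1 \<Longrightarrow> a ^ 2 \<noteq> 1 \<Longrightarrow> order a q \<ge> 2"
  shows "order a (complex_poly (geom2_poly m * geom2_poly T)) \<le> order a q"
proof -
  have o: "order a (complex_poly (geom2_poly m * geom2_poly T)) =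
      order a (complex_poly (geom2_poly m)) + order a (complex_poly (geom2_poly T))"
    using complex_geom2_poly_nonzero[OF m] complex_geom2_poly_nonzero[OF T]
    by (simp add: complex_poly_mult order_mult)
  have le1: "order a (complex_poly (geom2_poly m)) \<le> 1" "order a (complex_poly (geom2_poly T)) \<le> 1"
    using order_complex_geom2_poly_le_1 m T by auto
  consider
      "poly (complex_poly (geom2_poly m)) a = 0"
    | "poly (complex_poly (geom2_poly m)) a \<noteq> 0" "poly (complex_poly (geom2_poly T)) a \<noteq> 0"
    | "poly (complex_poly (geom2_poly m)) a \<noteq> 0" "poly (complex_poly (geom2_poly T)) a = 0"
    by blast
  then show ?thesis
  proof cases
    case 1
    then have "order a q \<ge> 2" using complex_geom2_poly_root[OF m 1] double by blast
    then show ?thesis using o le1 by linarith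
  next
    case 2
    then show ?thesis using o by (simp add: order_0I)
  next
    case 3
    note root = complex_geom2_poly_root[OF T 3(2)]
    show ?thesis
    proof (cases "a ^ (2 * m) = 1")
      case True
      then show ?thesis using double[OF True root(2)] o le1 3(1) by (simp add: order_0I)
    next
      case False
      then have "order a q \<noteq> 0" using simple[OF root(1)] q order_root by blast
      then show ?thesis using o le1 3(1) by (simp add: order_0I)
    qed
  qed
qed

lemma geom2_poly_prod_dvd_poly2:
  fixes P :: "rat poly poly"
  assumes m: "m \<ge> 1" and T: "T \<ge> 1"
    and simple: "\<And>z y. z ^ (2 * T) = 1 \<Longrightarrow> z ^ (2 * m) \<noteq> 1 \<Longrightarrow> y \<noteq> 0 \<Longrightarrow> eval2 P z y = 0"
    and double: "\<And>z y. z ^ (2 * m) = 1 \<Longrightarrow> z ^ 2 \<noteq> 1 \<Longrightarrow> y \<noteq> 0 \<Longrightarrow>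
               eval2 P z y = 0 \<and> ((\<lambda>x. eval2 P x y) has_field_derivative 0) (at z)"
  shows "\<exists>Q. P = smult (geom2_poly m * geom2_poly T) Q"
proof -
  define F where "F = geom2_poly m * geom2_poly T"
  have F: "complex_poly F \<noteq> 0"
    using complex_geom2_poly_nonzero[OF m] complex_geom2_poly_nonzero[OF T]
    by (simp add: F_def complex_poly_mult)
  have "F dvd coeff P j" for j
  proof (rule complex_poly_dvd_imp_dvd)
    define q where "q = coeff (complex_poly2 P) j"
    show "complex_poly F dvd complex_poly (coeff P j)"
    proof (cases "q = 0")
      case False
      have "order a (complex_poly F) \<le> order a q" for a
        unfolding F_def
      proof (rule order_complex_geom2_prod_le[OF m T False])
        show "poly q a = 0" if "a ^ (2 * T) = 1" "a ^ (2 * m) \<noteq> 1" for a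
          unfolding q_def by (rule poly_coeff_eq_0_if_eval2_eq_0) (use simple[OF that] in blast)
        show "order a q \<ge> 2" if "a ^ (2 * m) = 1" "a ^ 2 \<noteq> 1" for a
        proof (rule order_ge_2_if_double_root[OF False])
          show "poly q a = 0" unfolding q_def
            by (rule poly_coeff_eq_0_if_eval2_eq_0) (use double[OF that] in blast)
          show "poly (pderiv q) a = 0" unfolding q_def
            by (rule poly_pderiv_coeff_eq_0_if_deriv_eval2_eq_0) (use double[OF that] in blast)
        qed
      qed
      then show ?thesis using dvd_if_order_le[OF F False] by (simp add: q_def coeff_complex_poly2)
    qed (simp add: q_def coeff_complex_poly2)
  qed (use F in auto)
  then have "P = smult F (map_poly (\<lambda>c. c div F) P)"
    by (intro poly_eqI) (simp add: coeff_map_poly dvd_mult_div_cancel)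
  then show ?thesis unfolding F_def by blast
qed

section \<open>Quantum integers at roots of unity\<close>

lemma power_int_periodic:
  fixes z :: "'a::field"
  assumes "z \<noteq> 0" "z powi (2 * B) = 1"
  shows "z powi (a + 2 * B * k) = z powi a"
proof -
  have "z powi (a + 2 * B * k) = z powi a * (z powi (2 * B)) powi k"
    using assms(1) by (simp add: power_int_add power_int_mult)
  then show ?thesis using assms(2) by simp
qed

lemma sum_qint_exponents: "(\<Sum>j<n. int n - 1 - 2 * int j) = 0"
proof (induction n)
  case (Suc n)
  have "(\<Sum>j<Suc n. int (Suc n) - 1 - 2 * int j) = (\<Sum>j<n. int n - 2 * int j) - int n"
    by simp
  also have "(\<Sum>j<n. int n - 2 * int j) = (\<Sum>j<n. (int n - 1 - 2 * int j) + 1)" by simp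
  finally show ?case using Suc.IH by (simp only: sum.distrib) simp
qed simp

lemma qint_int_eq_0:
  fixes z :: "'a::field"
  assumes "z \<noteq> 0" "z powi (2 * (r * B)) = 1" "z powi (2 * B) \<noteq> 1"
  shows "qint_int r (z powi B) = 0"
proof -
  have "bracket (r * B) z = 0" "bracket B z \<noteq> 0" using assms bracket_eq_0_iff by blast+
  then show ?thesis using bracket_mult_eq_qint_int[OF assms(1), of r B] by simp
qed

lemma qint_at_root:
  fixes z :: "'a::field"
  assumes "z \<noteq> 0" "z powi (2 * B) = 1"
  shows "qint n (z powi B) = of_nat n * z powi (B * (int n - 1))"
proof -
  have "(z powi B) powi (int n - 1 - 2 * int j) = z powi (B * (int n - 1))" for j
  proof -
    have "(z powi B) powi (int n - 1 - 2 * int j) = z powi (B * (int n - 1) + 2 * B * (- int j))"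
      by (simp add: power_int_mult[symmetric] algebra_simps)
    then show ?thesis by (simp only: power_int_periodic[OF assms])
  qed
  then show ?thesis unfolding qint_def by simp
qed

lemma qint_int_at_root:
  fixes z :: "'a::field"
  assumes "z \<noteq> 0" "z powi (2 * B) = 1"
  shows "qint_int r (z powi B) = of_int r * z powi (B * (\<bar>r\<bar> - 1))"
  using assms by (cases "0 \<le> r") (simp_all add: qint_int_def qint_at_root)

lemma has_field_derivative_qint:
  fixes z :: complex
  assumes "z \<noteq> 0"
  shows "((\<lambda>x. qint n (x powi B)) has_field_derivative
      (\<Sum>j<n. of_int (B * (int n - 1 - 2 * int j)) * z powi (B * (int n - 1 - 2 * int j) - 1))) (at z)"
proof -
  have "((\<lambda>x. \<Sum>j<n. x powi (B * (int n - 1 - 2 * int j))) has_field_derivative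
      (\<Sum>j<n. of_int (B * (int n - 1 - 2 * int j)) * z powi (B * (int n - 1 - 2 * int j) - 1) * 1)) (at z)"
    by (intro DERIV_sum DERIV_power_int DERIV_ident) (use assms in simp)
  then show ?thesis unfolding qint_def by (simp add: power_int_mult)
qed

text \<open>At a root of z^(2B) = 1 all monomials of the derivative of [n]_(z^B) have the
  same power of z, and their coefficients, the exponents of [n], sum to zero.\<close>
lemma qint_has_derivative_0_at_root:
  fixes z :: complex
  assumes "z \<noteq> 0" "z powi (2 * B) = 1"
  shows "((\<lambda>x. qint n (x powi B)) has_field_derivative 0) (at z)"
proof -
  have "z powi (B * (int n - 1 - 2 * int j) - 1) = z powi (B * (int n - 1) - 1)" for j
    using power_int_periodic[OF assms, of "B * (int n - 1) - 1" "- int j"] by (simp add: algebra_simps)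
  then have "(\<Sum>j<n. of_int (B * (int n - 1 - 2 * int j)) * z powi (B * (int n - 1 - 2 * int j) - 1))
      = of_int B * z powi (B * (int n - 1) - 1) * of_int (\<Sum>j<n. int n - 1 - 2 * int j)"
    by (simp add: sum_distrib_left mult_ac)
  then show ?thesis using has_field_derivative_qint[OF assms(1), of n B] by (simp add: sum_qint_exponents)
qed

lemma qint_int_differentiable:
  fixes z :: complex
  assumes "z \<noteq> 0"
  shows "\<exists>D. ((\<lambda>x. qint_int r (x powi B)) has_field_derivative D) (at z)"
proof (cases "0 \<le> r")
  case False
  then show ?thesis unfolding qint_int_def using DERIV_minus[OF has_field_derivative_qint[OF assms]] by auto
qed (use has_field_derivative_qint[OF assms] in \<open>auto simp: qint_int_def\<close>)

lemma qint_int_has_derivative_0_at_root: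
  fixes z :: complex
  assumes "z \<noteq> 0" "z powi (2 * B) = 1"
  shows "((\<lambda>x. qint_int r (x powi B)) has_field_derivative 0) (at z)"
proof (cases "0 \<le> r")
  case False
  then show ?thesis unfolding qint_int_def using DERIV_minus[OF qint_has_derivative_0_at_root[OF assms]] by simp
qed (use qint_has_derivative_0_at_root[OF assms] in \<open>simp add: qint_int_def\<close>)

lemma DERIV_prod_mset_vanishing:
  fixes f :: "'b \<Rightarrow> complex \<Rightarrow> complex"
  assumes "\<And>i. i \<in># M \<Longrightarrow> (f i has_field_derivative f' i) (at z)"
  shows "\<exists>D. ((\<lambda>x. \<Prod>i\<in>#M. f i x) has_field_derivative D) (at z) \<and>
           ((\<forall>i\<in>#M. f' i = 0) \<longrightarrow> D = 0) \<and>
           (2 \<le> size (filter_mset (\<lambda>i. f i z = 0) M) \<longrightarrow> D = 0)"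
  using assms
proof (induction M)
  case (add a M)
  obtain D where D: "((\<lambda>x. \<Prod>i\<in>#M. f i x) has_field_derivative D) (at z)"
     "(\<forall>i\<in>#M. f' i = 0) \<longrightarrow> D = 0"
     "2 \<le> size (filter_mset (\<lambda>i. f i z = 0) M) \<longrightarrow> D = 0"
    using add by auto
  define D' where "D' = f' a * (\<Prod>i\<in>#M. f i z) + D * f a z"
  have "((\<lambda>x. f a x * (\<Prod>i\<in>#M. f i x)) has_field_derivative D') (at z)"
    unfolding D'_def using add.prems by (intro DERIV_mult D(1)) simp
  moreover have "(\<forall>i\<in>#add_mset a M. f' i = 0) \<longrightarrow> D' = 0" using D(2) by (simp add: D'_def)
  moreover have "D' = 0" if two: "2 \<le> size (filter_mset (\<lambda>i. f i z = 0) (add_mset a M))"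
  proof -
    have "1 \<le> size (filter_mset (\<lambda>i. f i z = 0) M)"
      using two by (cases "f a z = 0") simp_all
    then obtain i where "i \<in># filter_mset (\<lambda>i. f i z = 0) M"
      by (metis One_nat_def Suc_le_eq multiset_nonemptyE size_empty less_irrefl)
    then have "(\<Prod>i\<in>#M. f i z) = 0" by (force simp: image_iff)
    moreover have "f a z = 0 \<or> D = 0" using D(3) two by (cases "f a z = 0") auto
    ultimately show ?thesis by (auto simp: D'_def)
  qed
  ultimately show ?case by (intro exI[of _ D']) simp
qed (intro exI[of _ 0]; simp)

lemma prod_mset_powi_mult:
  fixes z :: "'a::field"
  assumes "z \<noteq> 0"
  shows "(\<Prod>i\<in>#\<nu>. z powi (a * int i)) = z powi (a * int (sum_mset \<nu>))"
  using assms by (induction \<nu>) (simp_all add: power_int_add algebra_simps)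

lemma prod_mset_power: "(\<Prod>i\<in>#\<nu>. (w::'a::comm_monoid_mult) ^ i) = w ^ sum_mset \<nu>"
  by (induction \<nu>) (simp_all add: power_add)

lemma power_int_2_mult: "(z::'a::field) powi (2 * (int d * int i)) = z ^ (2 * d * i)"
proof -
  have "2 * (int d * int i) = int (2 * d * i)" by simp
  then show ?thesis by (simp only: power_int_of_nat)
qed

text \<open>The partitions whose summand in qint_sum can survive at \<zeta>: every factor
  [m/d \<tau>]_(\<zeta>^(d i)) is evaluated at a point u with u^2 = 1.\<close>
definition good_partition :: "complex \<Rightarrow> nat \<Rightarrow> nat multiset \<Rightarrow> bool" where
  "good_partition \<zeta> d \<nu> \<longleftrightarrow> (\<forall>i\<in>#\<nu>. \<zeta> ^ (2 * d * i) = 1)"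

context
  fixes \<tau> :: int and m :: nat and \<zeta> :: complex
  assumes nonzero: "\<zeta> \<noteq> 0" and root: "\<zeta> powi (2 * (int m * \<tau>)) = 1"
begin

lemma qint_factor_eq_0:
  assumes "d dvd m" "\<zeta> ^ (2 * d * i) \<noteq> 1"
  shows "qint_int (int (m div d) * \<tau>) (\<zeta> powi (int d * int i)) = 0"
proof (rule qint_int_eq_0[OF nonzero])
  have "int (m div d) * int d = int m" using assms(1) by (simp flip: of_nat_mult)
  then have e: "2 * ((int (m div d) * \<tau>) * (int d * int i)) = (2 * (int m * \<tau>)) * int i"
    by (metis mult.assoc mult.left_commute)
  show "\<zeta> powi (2 * ((int (m div d) * \<tau>) * (int d * int i))) = 1"
    unfolding e by (subst power_int_mult, subst root, simp)
qed (use assms(2) in \<open>simp add: power_int_2_mult\<close>)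

lemma prod_qint_factor_not_good:
  assumes "d dvd m" "\<not> good_partition \<zeta> d \<nu>"
  shows "(\<Prod>i\<in>#\<nu>. qint_int (int (m div d) * \<tau>) (\<zeta> powi (int d * int i))) = 0"
proof -
  obtain i where "i \<in># \<nu>" "\<zeta> ^ (2 * d * i) \<noteq> 1" using assms(2) by (auto simp: good_partition_def)
  then show ?thesis using qint_factor_eq_0[OF assms(1)] by (force simp: image_iff)
qed

lemma prod_qint_factor_good:
  assumes "d dvd m" "\<nu> \<in> partitions (m div d)" "good_partition \<zeta> d \<nu>"
  shows "(\<Prod>i\<in>#\<nu>. qint_int r (\<zeta> powi (int d * int i))) = of_int r ^ size \<nu> * \<zeta> powi ((\<bar>r\<bar> - 1) * int m)"
proof -
  have "(\<Prod>i\<in>#\<nu>. qint_int r (\<zeta> powi (int d * int i))) =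
      (\<Prod>i\<in>#\<nu>. of_int r * \<zeta> powi ((int d * (\<bar>r\<bar> - 1)) * int i))"
  proof (intro arg_cong[where f=prod_mset] image_mset_cong)
    fix i assume "i \<in># \<nu>"
    then have "\<zeta> powi (2 * (int d * int i)) = 1"
      using assms(3) unfolding good_partition_def by (simp only: power_int_2_mult)
    from qint_int_at_root[OF nonzero this, of r]
    show "qint_int r (\<zeta> powi (int d * int i)) = of_int r * \<zeta> powi ((int d * (\<bar>r\<bar> - 1)) * int i)"
      by (simp add: mult_ac)
  qed
  also have "\<dots> = of_int r ^ size \<nu> * (\<Prod>i\<in>#\<nu>. \<zeta> powi ((int d * (\<bar>r\<bar> - 1)) * int i))"
    by (simp add: prod_mset.distrib)
  also have "(\<Prod>i\<in>#\<nu>. \<zeta> powi ((int d * (\<bar>r\<bar> - 1)) * int i)) = \<zeta> powi ((int d * (\<bar>r\<bar> - 1)) * int (m div d))"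
    using assms(2) by (simp only: prod_mset_powi_mult[OF nonzero] partitions_def mem_Collect_eq)
  also have "(int d * (\<bar>r\<bar> - 1)) * int (m div d) = (\<bar>r\<bar> - 1) * int m"
    using assms(1) by (simp flip: of_nat_mult add: mult_ac)
  finally show ?thesis .
qed

lemma prod_parts_root_power:
  assumes "d dvd m" "\<nu> \<in> partitions (m div d)"
  shows "(\<Prod>i\<in>#\<nu>. (\<zeta> ^ (2 * d)) ^ i) = \<zeta> ^ (2 * m)"
proof -
  have "(\<Prod>i\<in>#\<nu>. (\<zeta> ^ (2 * d)) ^ i) = \<zeta> ^ (2 * d * (m div d))"
    using assms(2) by (simp add: prod_mset_power partitions_def power_mult)
  also have "2 * d * (m div d) = 2 * m" using assms(1) by simp
  finally show ?thesis .
qed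

lemma good_partition_imp_root:
  assumes "d dvd m" "\<nu> \<in> partitions (m div d)" "good_partition \<zeta> d \<nu>"
  shows "\<zeta> ^ (2 * m) = 1"
proof -
  have "(\<Prod>i\<in>#\<nu>. (\<zeta> ^ (2 * d)) ^ i) = 1"
    using assms(3) unfolding good_partition_def by (intro prod_mset.neutral) (auto simp: power_mult)
  then show ?thesis using prod_parts_root_power[OF assms(1,2)] by simp
qed

text \<open>Since the parts sum to m/d and \<zeta>^(2m) = 1, a single part i with \<zeta>^(2di) \<noteq> 1 is impossible.\<close>
lemma bad_parts_count_neq_1:
  assumes "d dvd m" "\<nu> \<in> partitions (m div d)" "\<zeta> ^ (2 * m) = 1"
  shows "size (filter_mset (\<lambda>i. \<zeta> ^ (2 * d * i) \<noteq> 1) \<nu>) \<noteq> 1"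
proof
  assume "size (filter_mset (\<lambda>i. \<zeta> ^ (2 * d * i) \<noteq> 1) \<nu>) = 1"
  then obtain b where b: "filter_mset (\<lambda>i. \<zeta> ^ (2 * d * i) \<noteq> 1) \<nu> = {#b#}"
    using size_1_singleton_mset by blast
  have "b \<in># filter_mset (\<lambda>i. \<zeta> ^ (2 * d * i) \<noteq> 1) \<nu>" by (simp add: b)
  then have bad: "\<zeta> ^ (2 * d * b) \<noteq> 1" by simp
  have split: "\<nu> = filter_mset (\<lambda>i. \<zeta> ^ (2 * d * i) \<noteq> 1) \<nu> + filter_mset (\<lambda>i. \<not> \<zeta> ^ (2 * d * i) \<noteq> 1) \<nu>"
    by (rule multiset_partition)
  have "(\<Prod>i\<in>#filter_mset (\<lambda>i. \<not> \<zeta> ^ (2 * d * i) \<noteq> 1) \<nu>. (\<zeta> ^ (2 * d)) ^ i) = 1"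
    by (intro prod_mset.neutral) (auto simp: power_mult)
  then have "(\<Prod>i\<in>#\<nu>. (\<zeta> ^ (2 * d)) ^ i) = (\<zeta> ^ (2 * d)) ^ b"
    by (subst split) (simp add: b)
  then show False using prod_parts_root_power[OF assms(1,2)] assms(3) bad by (simp add: power_mult)
qed

lemma qint_factor_has_derivative:
  "\<exists>D. ((\<lambda>x. qint_int r (x powi (int d * int i))) has_field_derivative D) (at \<zeta>) \<and>
     (\<zeta> ^ (2 * d * i) = 1 \<longrightarrow> D = 0)"
proof (cases "\<zeta> ^ (2 * d * i) = 1")
  case True
  then show ?thesis using qint_int_has_derivative_0_at_root[OF nonzero] by (simp add: power_int_2_mult)
qed (use qint_int_differentiable[OF nonzero] in blast)

lemma two_vanishing_factors_if_not_good:
  assumes "d dvd m" "\<nu> \<in> partitions (m div d)" "\<zeta> ^ (2 * m) = 1" "\<not> good_partition \<zeta> d \<nu>"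
  shows "2 \<le> size (filter_mset (\<lambda>i. qint_int (int (m div d) * \<tau>) (\<zeta> powi (int d * int i)) = 0) \<nu>)"
proof -
  have "filter_mset (\<lambda>i. \<zeta> ^ (2 * d * i) \<noteq> 1) \<nu> \<subseteq>#
      filter_mset (\<lambda>i. qint_int (int (m div d) * \<tau>) (\<zeta> powi (int d * int i)) = 0) \<nu>"
    by (rule filter_mset_mono_strong) (use qint_factor_eq_0[OF assms(1)] in auto)
  moreover obtain i where "i \<in># \<nu>" "\<zeta> ^ (2 * d * i) \<noteq> 1"
    using assms(4) by (auto simp: good_partition_def)
  then have "filter_mset (\<lambda>i. \<zeta> ^ (2 * d * i) \<noteq> 1) \<nu> \<noteq> {#}"
    by (metis (mono_tags, lifting) empty_iff set_mset_empty set_mset_filter mem_Collect_eq)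
  ultimately show ?thesis
    using bad_parts_count_neq_1[OF assms(1-3)] size_mset_mono[of "filter_mset (\<lambda>i. \<zeta> ^ (2 * d * i) \<noteq> 1) \<nu>"]
    by (fastforce simp flip: size_eq_0_iff_empty)
qed

lemma prod_qint_factor_deriv_0:
  assumes "d dvd m" "\<nu> \<in> partitions (m div d)" "\<zeta> ^ (2 * m) = 1"
  shows "((\<lambda>x. \<Prod>i\<in>#\<nu>. qint_int (int (m div d) * \<tau>) (x powi (int d * int i))) has_field_derivative 0) (at \<zeta>)"
proof -
  define f :: "nat \<Rightarrow> complex \<Rightarrow> complex"
    where "f = (\<lambda>i x. qint_int (int (m div d) * \<tau>) (x powi (int d * int i)))"
  obtain f' where f': "\<And>i. (f i has_field_derivative f' i) (at \<zeta>)" "\<And>i. \<zeta> ^ (2 * d * i) = 1 \<Longrightarrow> f' i = 0"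
    using qint_factor_has_derivative unfolding f_def by metis
  obtain D where D: "((\<lambda>x. \<Prod>i\<in>#\<nu>. f i x) has_field_derivative D) (at \<zeta>)"
    "(\<forall>i\<in>#\<nu>. f' i = 0) \<longrightarrow> D = 0"
    "2 \<le> size (filter_mset (\<lambda>i. f i \<zeta> = 0) \<nu>) \<longrightarrow> D = 0"
    using DERIV_prod_mset_vanishing[of \<nu> f f' \<zeta>] f'(1) by blast
  have "D = 0"
  proof (cases "good_partition \<zeta> d \<nu>")
    case True
    then show ?thesis using D(2) f'(2) unfolding good_partition_def by simp
  next
    case False
    then show ?thesis using D(3) two_vanishing_factors_if_not_good[OF assms] by (simp add: f_def)
  qed
  then show ?thesis using D(1) by (simp add: f_def)
qed

end

section \<open>Moebius cancellation\<close>

lemma mobius_mult_prime: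
  fixes d p :: nat
  assumes "d > 0" "prime p" "\<not> p dvd d"
  shows "mobius (d * p) = - mobius d"
proof -
  have "coprime d p" using prime_imp_coprime[OF assms(2,3)] by (simp add: coprime_commute)
  then have sq: "squarefree (d * p) \<longleftrightarrow> squarefree d"
    using squarefree_multD(1)[of d p] squarefree_mult_coprime squarefree_prime[OF assms(2)] by blast
  have "prime_factors (d * p) = insert p (prime_factors d)"
    using assms prime_factors_product[of d p] prime_prime_factors[OF assms(2)] by auto
  moreover have "p \<notin> prime_factors d" using assms(3) by (simp add: in_prime_factors_iff)
  ultimately have "card (prime_factors (d * p)) = Suc (card (prime_factors d))" by simp
  then show ?thesis unfolding mobius_def sq by simp
qed

lemma mobius_eq_0_if_square_dvd:
  fixes d p :: nat
  assumes "prime p" "p ^ 2 dvd d"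
  shows "mobius d = 0"
  using assms not_squarefreeI[of p d] prime_gt_1_nat[OF assms(1)] by (simp add: mobius_def)

lemma sum_mobius_multiples_of_prime:
  fixes X :: "nat \<Rightarrow> 'a::comm_ring_1"
  assumes m: "m > 0" and p: "prime p" "p dvd m"
  shows "(\<Sum>d\<in>{d. d dvd m \<and> p dvd d}. of_int (mobius d) * X d) =
      (\<Sum>d\<in>{d. d dvd m \<and> \<not> p dvd d}. of_int (mobius (d * p)) * X (d * p))"
proof -
  define A where "A = {d. d dvd m \<and> \<not> p dvd d}"
  define B where "B = {d. d dvd m \<and> p dvd d}"
  have img: "(\<lambda>d. d * p) ` A \<subseteq> B"
  proof
    fix x assume "x \<in> (\<lambda>d. d * p) ` A"
    then obtain d where d: "d dvd m" "\<not> p dvd d" "x = d * p" by (auto simp: A_def)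
    then have "coprime d p" using prime_imp_coprime[OF p(1)] by (simp add: coprime_commute)
    then show "x \<in> B" using d p(2) by (simp add: B_def divides_mult)
  qed
  have "finite B" using m by (simp add: B_def)
  then have "(\<Sum>d\<in>B. of_int (mobius d) * X d) = (\<Sum>d\<in>(\<lambda>d. d * p) ` A. of_int (mobius d) * X d)"
  proof (rule sum.mono_neutral_right[OF _ img], intro ballI)
    fix x assume x: "x \<in> B - (\<lambda>d. d * p) ` A"
    then have "x dvd m" "p dvd x" by (auto simp: B_def)
    then obtain d' where d': "x = d' * p" "x dvd m" by (metis dvdE mult.commute)
    then have "p dvd d'" using x by (auto simp: A_def dest: dvd_mult_left)
    then have "p ^ 2 dvd x" using d' by (auto simp: power2_eq_square)
    then show "of_int (mobius x) * X x = 0" using mobius_eq_0_if_square_dvd[OF p(1)] by simp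
  qed
  moreover have "inj_on (\<lambda>d. d * p) A" using p(1) by (auto simp: inj_on_def prime_gt_0_nat)
  ultimately show ?thesis unfolding A_def B_def by (simp add: sum.reindex o_def)
qed

text \<open>The terms for d and d p cancel, and those with p^2 | d vanish.\<close>
lemma sum_mobius_eq_0_if_invariant:
  fixes X :: "nat \<Rightarrow> 'a::comm_ring_1"
  assumes m: "m > 0" and p: "prime p" "p dvd m"
    and X: "\<And>d. d dvd m \<Longrightarrow> squarefree d \<Longrightarrow> \<not> p dvd d \<Longrightarrow> X d = X (d * p)"
  shows "(\<Sum>d\<in>{d. d dvd m}. of_int (mobius d) * X d) = 0"
proof -
  define A where "A = {d. d dvd m \<and> \<not> p dvd d}"
  have split: "{d. d dvd m} = A \<union> {d. d dvd m \<and> p dvd d}" "A \<inter> {d. d dvd m \<and> p dvd d} = {}"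
    by (auto simp: A_def)
  have pair: "of_int (mobius d) * X d + of_int (mobius (d * p)) * X (d * p) = 0" if d: "d \<in> A" for d
  proof -
    have "d > 0" using d m by (auto simp: A_def intro: Nat.gr0I)
    then have mu: "mobius (d * p) = - mobius d" using mobius_mult_prime p(1) d by (simp add: A_def)
    show ?thesis
    proof (cases "squarefree d")
      case True
      then show ?thesis using X d by (auto simp: A_def mu)
    next
      case False
      then have "mobius d = 0" by (simp add: mobius_def)
      then show ?thesis by (simp add: mu)
    qed
  qed
  have "(\<Sum>d\<in>{d. d dvd m}. of_int (mobius d) * X d) =
      (\<Sum>d\<in>A. of_int (mobius d) * X d + of_int (mobius (d * p)) * X (d * p))"
    using m unfolding split(1)
    by (subst sum.union_disjoint[OF _ _ split(2)])
       (simp_all add: A_def sum_mobius_multiples_of_prime[OF m p] sum.distrib)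
  also have "\<dots> = 0" using pair by simp
  finally show ?thesis .
qed

lemma zee_scale:
  fixes p :: nat
  assumes "p > 0"
  shows "zee (image_mset ((*) p) \<nu>) = p ^ size \<nu> * zee \<nu>"
proof -
  have inj: "inj ((*) p)" using assms by (auto simp: inj_def)
  have count: "count (image_mset ((*) p) \<nu>) (p * j) = count \<nu> j" for j
  proof -
    have "(*) p -` {p * j} = {j}" using assms by auto
    then show ?thesis by (simp add: count_image_mset) (auto simp: Int_insert_left not_in_iff)
  qed
  have "zee (image_mset ((*) p) \<nu>) = (\<Prod>j\<in>set_mset \<nu>. (p * j) ^ count \<nu> j * fact (count \<nu> j))"
    unfolding zee_def set_image_mset by (subst prod.reindex) (use inj in \<open>auto simp: inj_on_def count\<close>)
  also have "\<dots> = (\<Prod>j\<in>set_mset \<nu>. p ^ count \<nu> j) * zee \<nu>"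
    by (simp add: zee_def power_mult_distrib prod.distrib mult.assoc)
  also have "(\<Prod>j\<in>set_mset \<nu>. p ^ count \<nu> j) = p ^ size \<nu>"
    by (simp add: power_sum size_multiset_overloaded_eq)
  finally show ?thesis .
qed

lemma inj_image_mset_mult:
  fixes p :: nat
  assumes "p > 0"
  shows "inj (image_mset ((*) p))"
proof (rule injI)
  fix A B assume "image_mset ((*) p) A = image_mset ((*) p) B"
  then have "image_mset (\<lambda>i. i div p) (image_mset ((*) p) A) = image_mset (\<lambda>i. i div p) (image_mset ((*) p) B)"
    by simp
  then show "A = B" using assms by (simp add: image_mset.compositionality o_def)
qed

lemma partitions_scale:
  fixes p n :: nat
  assumes "p > 0"
  shows "{\<nu> \<in> partitions (p * n). \<forall>i\<in>#\<nu>. p dvd i} = image_mset ((*) p) ` partitions n"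
proof (intro equalityI subsetI)
  fix \<nu> assume "\<nu> \<in> {\<nu> \<in> partitions (p * n). \<forall>i\<in>#\<nu>. p dvd i}"
  then have \<nu>: "\<forall>i\<in>#\<nu>. 0 < i" "sum_mset \<nu> = p * n" "\<forall>i\<in>#\<nu>. p dvd i" by (auto simp: partitions_def)
  define \<mu> where "\<mu> = image_mset (\<lambda>i. i div p) \<nu>"
  have e: "image_mset ((*) p) \<mu> = \<nu>"
    unfolding \<mu>_def image_mset.compositionality o_def using \<nu>(3)
    by (subst image_mset_cong[where g="\<lambda>x. x"]) auto
  have "p * sum_mset \<mu> = p * n"
    using sum_mset_distrib_left[of p "\<lambda>x. x" \<mu>] e \<nu>(2) by simp
  moreover have "\<forall>i\<in>#\<mu>. 0 < i"
  proof
    fix i assume "i \<in># \<mu>"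
    then obtain x where x: "x \<in># \<nu>" "i = x div p" by (auto simp: \<mu>_def)
    then have "0 < x" "p dvd x" using \<nu> by auto
    then show "0 < i" using x(2) assms by (auto elim!: dvdE)
  qed
  ultimately have "\<mu> \<in> partitions n" using assms by (simp add: partitions_def)
  then show "\<nu> \<in> image_mset ((*) p) ` partitions n" using e by blast
next
  fix \<nu> assume "\<nu> \<in> image_mset ((*) p) ` partitions n"
  then obtain \<mu> where \<mu>: "\<mu> \<in> partitions n" "\<nu> = image_mset ((*) p) \<mu>" by blast
  then show "\<nu> \<in> {\<nu> \<in> partitions (p * n). \<forall>i\<in>#\<nu>. p dvd i}"
    using assms sum_mset_distrib_left[of p "\<lambda>x. x" \<mu>] by (auto simp: partitions_def)
qed

lemma power_eq_1_iff_order_dvd: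
  fixes w :: "'a::comm_ring_1"
  assumes "n > 0" "w ^ n = 1" "w \<noteq> 1"
  obtains e where "e > 1" "\<And>k. w ^ k = 1 \<longleftrightarrow> e dvd k"
proof -
  define e where "e = (LEAST k. 0 < k \<and> w ^ k = 1)"
  have e: "0 < e" "w ^ e = 1"
    using LeastI[of "\<lambda>k. 0 < k \<and> w ^ k = 1", OF conjI[OF assms(1,2)]] by (auto simp: e_def)
  have "w ^ k = 1 \<longleftrightarrow> e dvd k" for k
  proof
    assume "w ^ k = 1"
    moreover have "w ^ k = (w ^ e) ^ (k div e) * w ^ (k mod e)"
      by (simp flip: power_mult power_add)
    ultimately have "w ^ (k mod e) = 1" using e by simp
    then have "\<not> 0 < k mod e"
      using not_less_Least[of "k mod e" "\<lambda>k. 0 < k \<and> w ^ k = 1"] e(1) by (auto simp: e_def)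
    then show "e dvd k" by (simp add: mod_eq_0_iff_dvd)
  next
    assume "e dvd k"
    then obtain q where "k = e * q" by (elim dvdE)
    then show "w ^ k = 1" using e by (simp add: power_mult)
  qed
  moreover have "e > 1" using assms(3) e by (cases "e = 1") auto
  ultimately show ?thesis using that by blast
qed

section \<open>Vanishing of the sum at roots of unity\<close>

lemma power_int_eq_1_if_power_eq_1: "(\<zeta>::complex) ^ (2 * m) = 1 \<Longrightarrow> \<zeta> powi (2 * (int m * \<tau>)) = 1"
proof -
  assume h: "\<zeta> ^ (2 * m) = 1"
  have "\<zeta> powi (2 * (int m * \<tau>)) = (\<zeta> powi (int (2 * m))) powi \<tau>"
    by (simp add: power_int_mult mult.assoc)
  also have "\<zeta> powi (int (2 * m)) = 1" using h by (simp only: power_int_of_nat)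
  finally show ?thesis by simp
qed

lemma qint_sum_eq_0_at_simple_root:
  fixes \<zeta> :: complex
  assumes "\<zeta> \<noteq> 0" "\<zeta> powi (2 * (int m * \<tau>)) = 1" "\<zeta> ^ (2 * m) \<noteq> 1"
  shows "qint_sum \<tau> m \<zeta> y = 0"
  unfolding qint_sum_def
proof (intro sum.neutral ballI)
  fix d \<nu> assume d: "d \<in> {d. d dvd m}" and \<nu>: "\<nu> \<in> partitions (m div d)"
  then have "\<not> good_partition \<zeta> d \<nu>"
    using good_partition_imp_root[OF assms(1,2)] assms(3) by blast
  then have "(\<Prod>i\<in>#\<nu>. qint_int (int (m div d) * \<tau>) (\<zeta> powi (int d * int i))) = 0"
    using prod_qint_factor_not_good[OF assms(1,2)] d by simp
  then show "rhs_coeff \<tau> m d \<nu> * (\<Prod>i\<in>#\<nu>. qint_int (int (m div d) * \<tau>) (\<zeta> powi (int d * int i))) *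
      (\<Prod>i\<in>#\<nu>. bracket (int d * int i) y) = 0"
    by simp
qed

lemma qint_sum_deriv_0_at_root:
  fixes \<zeta> :: complex
  assumes "m \<ge> 1" "\<zeta> ^ (2 * m) = 1"
  shows "((\<lambda>x. qint_sum \<tau> m x y) has_field_derivative 0) (at \<zeta>)"
proof -
  have "\<zeta> \<noteq> 0" using assms by (auto simp: power_0_left)
  note prod_deriv = prod_qint_factor_deriv_0[OF this power_int_eq_1_if_power_eq_1[OF assms(2)]]
  have "((\<lambda>x. qint_sum \<tau> m x y) has_field_derivative
      (\<Sum>d\<in>{d. d dvd m}. \<Sum>\<nu>\<in>partitions (m div d). rhs_coeff \<tau> m d \<nu> * 0 * (\<Prod>i\<in>#\<nu>. bracket (int d * int i) y))) (at \<zeta>)"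
    unfolding qint_sum_def
    by (intro DERIV_sum DERIV_cmult_right DERIV_cmult prod_deriv) (auto simp: assms(2))
  then show ?thesis by simp
qed

definition root_sign :: "complex \<Rightarrow> nat \<Rightarrow> int \<Rightarrow> complex" where
  "root_sign \<zeta> m r = (-1) powi r * \<zeta> powi ((\<bar>r\<bar> - 1) * int m)"

definition good_part_sum :: "int \<Rightarrow> nat \<Rightarrow> complex \<Rightarrow> complex \<Rightarrow> nat \<Rightarrow> complex" where
  "good_part_sum \<tau> m \<zeta> y d = (\<Sum>\<nu>\<in>{\<nu> \<in> partitions (m div d). good_partition \<zeta> d \<nu>}.
      of_int (int (m div d) * \<tau>) ^ size \<nu> / of_nat (zee \<nu>) * (\<Prod>i\<in>#\<nu>. bracket (int d * int i) y))"

lemma qint_sum_at_root: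
  fixes \<zeta> :: complex
  assumes m: "m \<ge> 1" and root: "\<zeta> ^ (2 * m) = 1"
  shows "qint_sum \<tau> m \<zeta> y =
      (\<Sum>d\<in>{d. d dvd m}. of_int (mobius d) * (root_sign \<zeta> m (int (m div d) * \<tau>) * good_part_sum \<tau> m \<zeta> y d))"
  unfolding qint_sum_def
proof (rule sum.cong[OF refl])
  fix d assume d: "d \<in> {d. d dvd m}"
  have "\<zeta> \<noteq> 0" using assms by (auto simp: power_0_left)
  note facts = this power_int_eq_1_if_power_eq_1[OF root]
  have summand: "rhs_coeff \<tau> m d \<nu> * (\<Prod>i\<in>#\<nu>. qint_int (int (m div d) * \<tau>) (\<zeta> powi (int d * int i))) *
        (\<Prod>i\<in>#\<nu>. bracket (int d * int i) y)
      = of_int (mobius d) * (root_sign \<zeta> m (int (m div d) * \<tau>) *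
          (if good_partition \<zeta> d \<nu> then of_int (int (m div d) * \<tau>) ^ size \<nu> / of_nat (zee \<nu>) *
             (\<Prod>i\<in>#\<nu>. bracket (int d * int i) y) else 0))"
    if "\<nu> \<in> partitions (m div d)" for \<nu>
    using prod_qint_factor_good[OF facts _ that] prod_qint_factor_not_good[OF facts] d
    by (simp add: rhs_coeff_def root_sign_def)
  show "(\<Sum>\<nu>\<in>partitions (m div d). rhs_coeff \<tau> m d \<nu> *
        (\<Prod>i\<in>#\<nu>. qint_int (int (m div d) * \<tau>) (\<zeta> powi (int d * int i))) * (\<Prod>i\<in>#\<nu>. bracket (int d * int i) y))
      = of_int (mobius d) * (root_sign \<zeta> m (int (m div d) * \<tau>) * good_part_sum \<tau> m \<zeta> y d)"
  proof -
    have "(\<Sum>\<nu>\<in>partitions (m div d). rhs_coeff \<tau> m d \<nu> *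
        (\<Prod>i\<in>#\<nu>. qint_int (int (m div d) * \<tau>) (\<zeta> powi (int d * int i))) * (\<Prod>i\<in>#\<nu>. bracket (int d * int i) y))
      = (\<Sum>\<nu>\<in>partitions (m div d). of_int (mobius d) * (root_sign \<zeta> m (int (m div d) * \<tau>) *
          (if good_partition \<zeta> d \<nu> then of_int (int (m div d) * \<tau>) ^ size \<nu> / of_nat (zee \<nu>) *
             (\<Prod>i\<in>#\<nu>. bracket (int d * int i) y) else 0)))"
      by (rule sum.cong[OF refl summand])
    then show ?thesis
      unfolding good_part_sum_def sum.inter_filter[OF finite_partitions] by (simp add: sum_distrib_left)
  qed
qed

lemma neg_one_powi: "((-1::complex) powi k) = (if even k then 1 else -1)"
  by (cases "0 \<le> k") (simp_all add: power_int_def even_nat_iff)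

lemma root_sign_mult:
  assumes "\<zeta> ^ m = 1 \<or> \<zeta> ^ m = -1" "odd p \<or> \<zeta> ^ m = -1 \<or> even r"
  shows "root_sign \<zeta> m (int p * r) = root_sign \<zeta> m r"
proof -
  have \<sigma>: "\<zeta> powi ((\<bar>k\<bar> - 1) * int m) = (\<zeta> ^ m) powi (\<bar>k\<bar> - 1)" for k
    by (simp add: power_int_mult mult.commute[of _ "int m"])
  have "even (\<bar>k\<bar> - 1) \<longleftrightarrow> odd k" for k :: int by auto
  then show ?thesis using assms unfolding root_sign_def \<sigma> by (auto simp: neg_one_powi)
qed

context
  fixes \<tau> :: int and m :: nat and \<zeta> y :: complex and e p :: nat
  assumes m: "m \<ge> 1" and root: "\<zeta> ^ (2 * m) = 1"
    and order: "\<And>n. \<zeta> ^ (2 * n) = 1 \<longleftrightarrow> e dvd n"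
    and p: "prime p" "p dvd e"
begin

lemma prime_dvd_m: "p dvd m"
  using order root p(2) dvd_trans by blast

lemma mult_prime_dvd_m:
  assumes "d dvd m" "\<not> p dvd d"
  shows "d * p dvd m"
proof -
  have "coprime d p" using prime_imp_coprime[OF p(1) assms(2)] by (simp add: coprime_commute)
  then show ?thesis using assms(1) prime_dvd_m by (simp add: divides_mult)
qed

lemma div_eq_prime_mult_div:
  assumes "d dvd m" "\<not> p dvd d"
  shows "m div d = p * (m div (d * p))"
proof -
  obtain N where N: "m = d * p * N" using mult_prime_dvd_m[OF assms] by (elim dvdE)
  have "d > 0" using assms(1) m by (auto intro!: Nat.gr0I)
  then show ?thesis using N prime_gt_0_nat[OF p(1)] by simp
qed

lemma good_partitions_scale:
  assumes d: "d dvd m" "\<not> p dvd d"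
  shows "{\<nu> \<in> partitions (m div d). good_partition \<zeta> d \<nu>} =
      image_mset ((*) p) ` {\<mu> \<in> partitions (m div (d * p)). good_partition \<zeta> (d * p) \<mu>}"
proof -
  have p0: "p > 0" using p(1) prime_gt_0_nat by blast
  define N where "N = m div (d * p)"
  have mdp: "m div d = p * N" "m div (d * p) = N"
    using div_eq_prime_mult_div[OF d] by (simp_all add: N_def)
  have good_scale: "good_partition \<zeta> d (image_mset ((*) p) \<mu>) \<longleftrightarrow> good_partition \<zeta> (d * p) \<mu>" for \<mu>
    by (auto simp: good_partition_def mult_ac)
  have parts_dvd: "\<forall>i\<in>#\<nu>. p dvd i" if "good_partition \<zeta> d \<nu>" for \<nu>
  proof
    fix i assume "i \<in># \<nu>"
    then have "e dvd d * i" using that order unfolding good_partition_def by (simp add: mult.assoc)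
    then have "p dvd d * i" using p(2) dvd_trans by blast
    then show "p dvd i" using p(1) d(2) by (simp add: prime_dvd_mult_iff)
  qed
  show ?thesis
  proof (intro equalityI subsetI)
    fix \<nu> assume \<nu>: "\<nu> \<in> {\<nu> \<in> partitions (m div d). good_partition \<zeta> d \<nu>}"
    then have "\<forall>i\<in>#\<nu>. p dvd i" using parts_dvd by blast
    then have "\<nu> \<in> {\<nu> \<in> partitions (p * N). \<forall>i\<in>#\<nu>. p dvd i}" using \<nu> mdp by simp
    then obtain \<mu> where "\<mu> \<in> partitions N" "\<nu> = image_mset ((*) p) \<mu>"
      using partitions_scale[OF p0, of N] by blast
    then show "\<nu> \<in> image_mset ((*) p) ` {\<mu> \<in> partitions (m div (d * p)). good_partition \<zeta> (d * p) \<mu>}"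
      using \<nu> good_scale mdp by auto
  next
    fix \<nu> assume "\<nu> \<in> image_mset ((*) p) ` {\<mu> \<in> partitions (m div (d * p)). good_partition \<zeta> (d * p) \<mu>}"
    then obtain \<mu> where \<mu>: "\<mu> \<in> partitions N" "good_partition \<zeta> (d * p) \<mu>" "\<nu> = image_mset ((*) p) \<mu>"
      using mdp by blast
    then have "\<nu> \<in> partitions (p * N)" using partitions_scale[OF p0, of N] by blast
    then show "\<nu> \<in> {\<nu> \<in> partitions (m div d). good_partition \<zeta> d \<nu>}" using \<mu> good_scale mdp by simp
  qed
qed

lemma good_part_sum_scale:
  assumes d: "d dvd m" "\<not> p dvd d"
  shows "good_part_sum \<tau> m \<zeta> y d = good_part_sum \<tau> m \<zeta> y (d * p)"
proof -
  have p0: "p > 0" using p(1) prime_gt_0_nat by blast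
  have mdp: "int (m div d) = int p * int (m div (d * p))"
    using div_eq_prime_mult_div[OF d] by simp
  have "inj_on (image_mset ((*) p)) X" for X
    using inj_image_mset_mult[OF p0] by (rule inj_on_subset) simp
  moreover have "of_int (int (m div d) * \<tau>) ^ size (image_mset ((*) p) \<mu>) / of_nat (zee (image_mset ((*) p) \<mu>)) *
        (\<Prod>i\<in>#image_mset ((*) p) \<mu>. bracket (int d * int i) y) =
      of_int (int (m div (d * p)) * \<tau>) ^ size \<mu> / of_nat (zee \<mu>) * (\<Prod>i\<in>#\<mu>. bracket (int (d * p) * int i) y)" for \<mu>
    using p0 by (simp add: zee_scale mdp power_mult_distrib image_mset.compositionality o_def mult_ac)
  ultimately show ?thesis
    unfolding good_part_sum_def good_partitions_scale[OF d] by (simp add: sum.reindex)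
qed

text \<open>For p = 2 and \<zeta>^m = 1 the order e of \<zeta>^2 is even and divides m/2, so 4 | m and
  m/(2d) is even for odd d.\<close>
lemma root_sign_scale:
  assumes d: "d dvd m" "\<not> p dvd d"
  shows "root_sign \<zeta> m (int (m div d) * \<tau>) = root_sign \<zeta> m (int (m div (d * p)) * \<tau>)"
proof -
  define N where "N = m div (d * p)"
  have mdN: "m div d = p * N" "m div (d * p) = N"
    using div_eq_prime_mult_div[OF d] by (simp_all add: N_def)
  have "(\<zeta> ^ m) ^ 2 = 1" using root by (simp add: power_mult[symmetric] mult.commute)
  then have pm1: "\<zeta> ^ m = 1 \<or> \<zeta> ^ m = -1" by (simp add: power2_eq_1_iff)
  have "odd p \<or> \<zeta> ^ m = -1 \<or> even (int N * \<tau>)"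
  proof (rule ccontr)
    assume "\<not> ?thesis"
    then have p2: "p = 2" and m1: "\<zeta> ^ m = 1" and "odd N"
      using pm1 prime_odd_nat[OF p(1)] prime_ge_2_nat[OF p(1)] by (fastforce, auto)
    then have "odd d" using d(2) by simp
    have "even m" using prime_dvd_m p2 by simp
    then have "e dvd m div 2" using order m1 by (metis dvd_mult_div_cancel)
    then have "2 dvd m div 2" using p(2) p2 dvd_trans by blast
    moreover have "m = d * p * N"
      using d(1) mdN(1) dvd_mult_div_cancel[of d m] by (simp add: mult.assoc)
    ultimately show False using p2 \<open>odd d\<close> \<open>odd N\<close> by auto
  qed
  then show ?thesis unfolding mdN using root_sign_mult[OF pm1] by (simp add: mult.assoc)
qed

end

lemma qint_sum_eq_0_at_double_root:
  fixes \<zeta> :: complex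
  assumes m: "m \<ge> 1" and root: "\<zeta> ^ (2 * m) = 1" and nontrivial: "\<zeta> ^ 2 \<noteq> 1"
  shows "qint_sum \<tau> m \<zeta> y = 0"
proof -
  obtain e where e: "e > 1" "\<And>n. (\<zeta> ^ 2) ^ n = 1 \<longleftrightarrow> e dvd n"
    using power_eq_1_iff_order_dvd[of m "\<zeta> ^ 2"] m root nontrivial by (auto simp: power_mult)
  then have order: "\<And>n. \<zeta> ^ (2 * n) = 1 \<longleftrightarrow> e dvd n" by (simp add: power_mult)
  obtain p where p: "prime p" "p dvd e" using prime_factor_nat[of e] e(1) by auto
  note ctxt = m root order p
  have "qint_sum \<tau> m \<zeta> y =
      (\<Sum>d\<in>{d. d dvd m}. of_int (mobius d) * (root_sign \<zeta> m (int (m div d) * \<tau>) * good_part_sum \<tau> m \<zeta> y d))"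
    by (rule qint_sum_at_root[OF m root])
  also have "\<dots> = 0"
    using m prime_dvd_m[OF ctxt] root_sign_scale[OF ctxt] good_part_sum_scale[OF ctxt]
    by (intro sum_mobius_eq_0_if_invariant[OF _ p(1)]) auto
  finally show ?thesis .
qed

lemma emb_geom2_poly: "emb [:geom2_poly n:] = (\<Sum>j<n. qh ^ (2 * j))"
proof -
  have "emb [:\<Sum>j\<in>A. f j:] = (\<Sum>j\<in>A. emb [:f j:])" for A and f :: "nat \<Rightarrow> rat poly"
  proof (induction A rule: infinite_finite_induct)
    case (insert x F)
    show ?case by (simp add: insert(1,2) insert.IH[symmetric] flip: emb_add)
  qed (simp_all add: emb_0)
  then have "emb [:geom2_poly n:] = (\<Sum>j<n. emb [:monom 1 (2 * j):])"
    unfolding geom2_poly_def .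
  also have "\<dots> = (\<Sum>j<n. qh ^ (2 * j))"
    by (simp add: monom_altdef qh_def emb_power flip: poly_const_pow)
  finally show ?thesis .
qed

lemma br_eq_geom2_poly: "br (int n) qh = emb [:geom2_poly n:] * (qh ^ 2 - 1) / qh ^ n"
proof -
  have "emb [:geom2_poly n:] * (qh ^ 2 - 1) = qh ^ (2 * n) - 1" by (simp add: emb_geom2_poly geom2_sum_mult)
  moreover have "br (int n) qh = (qh ^ (2 * n) - 1) / qh ^ n"
    using qh_nonzero
    by (simp add: br_def power_int_minus field_simps power_mult power2_eq_square flip: power_add)
  ultimately show ?thesis by simp
qed

lemma br_mult_eq_sgn_mult: "br (int m * \<tau>) qh = of_int (sgn \<tau>) * br (int (m * nat \<bar>\<tau>\<bar>)) qh"
  by (cases "\<tau> > 0"; cases "\<tau> = 0") (simp_all add: br_def)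

lemma power_int_eq_1_if_power_abs_eq_1:
  fixes z :: complex
  assumes "z ^ (2 * (m * nat \<bar>\<tau>\<bar>)) = 1"
  shows "z powi (2 * (int m * \<tau>)) = 1"
proof -
  have "2 * (int m * \<tau>) = int (2 * (m * nat \<bar>\<tau>\<bar>)) * sgn \<tau>"
    by (cases "\<tau> \<ge> 0") (simp_all add: abs_if sgn_if)
  then show ?thesis using assms by (simp only: power_int_mult power_int_of_nat) simp
qed

text \<open>Clearing the denominator (x y)^K, the vanishing of qint_sum at the roots of
  geom2_poly T, and to second order at those of geom2_poly m, gives the factorization.\<close>
lemma qint_sum_factorization:
  assumes tau: "\<tau> \<noteq> 0" and m: "1 \<le> m"
  obtains Q K where "qint_sum \<tau> m qh ah =
      emb [:geom2_poly m:] * emb [:geom2_poly (m * nat \<bar>\<tau>\<bar>):] * emb Q / (qh * ah) ^ K"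
proof -
  obtain P K where PK: "qint_sum \<tau> m qh ah = emb P / emb xy_poly ^ K"
    and ev: "\<And>x y. x \<noteq> 0 \<Longrightarrow> y \<noteq> 0 \<Longrightarrow> qint_sum \<tau> m x y = eval2 P x y / (x * y) ^ K"
    using R_repr_qint_sum[of \<tau> m] unfolding R_repr_def by blast
  define T where "T = m * nat \<bar>\<tau>\<bar>"
  have T: "T \<ge> 1" using tau m by (simp add: T_def)
  have eval: "eval2 P x y = qint_sum \<tau> m x y * (x * y) ^ K" if "x \<noteq> 0" "y \<noteq> 0" for x y
    using ev[OF that] that by simp
  have "\<exists>Q. P = smult (geom2_poly m * geom2_poly T) Q"
  proof (rule geom2_poly_prod_dvd_poly2[OF m T])
    fix z y :: complex assume z: "z ^ (2 * T) = 1" "z ^ (2 * m) \<noteq> 1" and y: "y \<noteq> 0"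
    have "z \<noteq> 0" using z T by (auto simp: power_0_left)
    moreover have "qint_sum \<tau> m z y = 0"
      using qint_sum_eq_0_at_simple_root[OF \<open>z \<noteq> 0\<close> _ z(2)] z(1)
        power_int_eq_1_if_power_abs_eq_1[of z m \<tau>] by (simp add: T_def)
    ultimately show "eval2 P z y = 0" using eval y by simp
  next
    fix z y :: complex assume z: "z ^ (2 * m) = 1" "z ^ 2 \<noteq> 1" and y: "y \<noteq> 0"
    have z0: "z \<noteq> 0" using z m by (auto simp: power_0_left)
    have S0: "qint_sum \<tau> m z y = 0" by (rule qint_sum_eq_0_at_double_root[OF m z])
    have "((\<lambda>x. qint_sum \<tau> m x y * (x * y) ^ K) has_field_derivative
        0 * (z * y) ^ K + of_nat K * (1 * y * (z * y) ^ (K - Suc 0)) * qint_sum \<tau> m z y) (at z)"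
      by (intro DERIV_mult qint_sum_deriv_0_at_root[OF m z(1)] DERIV_power DERIV_cmult_right DERIV_ident)
    then have "((\<lambda>x. qint_sum \<tau> m x y * (x * y) ^ K) has_field_derivative 0) (at z)"
      using S0 by simp
    then have "((\<lambda>x. eval2 P x y) has_field_derivative 0) (at z)"
      by (rule has_field_derivative_transform_within_open[where S="- {0}"]) (use z0 y eval in auto)
    then show "eval2 P z y = 0 \<and> ((\<lambda>x. eval2 P x y) has_field_derivative 0) (at z)"
      using eval[OF z0 y] S0 by simp
  qed
  then obtain Q where "P = smult (geom2_poly m * geom2_poly T) Q" by blast
  then have "P = [:geom2_poly m:] * [:geom2_poly T:] * Q" by (simp add: mult.commute)
  then have "emb P = emb [:geom2_poly m:] * emb [:geom2_poly T:] * emb Q" by (simp only: emb_mult)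
  then show ?thesis using that PK by (simp add: emb_xy_poly T_def)
qed

lemma qint_sum_divisible:
  assumes tau: "\<tau> \<noteq> 0" and m: "1 \<le> m"
  shows "\<exists>c. in_R c \<and> qint_sum \<tau> m qh ah = (br (int m * \<tau>) qh * br (int m) qh / (br 1 qh) ^ 2) * c"
proof -
  define T where "T = m * nat \<bar>\<tau>\<bar>"
  obtain Q K where QK: "qint_sum \<tau> m qh ah = emb [:geom2_poly m:] * emb [:geom2_poly T:] * emb Q / (qh * ah) ^ K"
    using qint_sum_factorization[OF assms] unfolding T_def by blast
  define c where "c = of_int (sgn \<tau>) * emb Q * qh ^ T * qh ^ m * inverse qh ^ 2 * inverse qh ^ K * inverse ah ^ K"
  have "in_R c"
    unfolding c_def
    by (rule R_repr_imp_in_R[where f="\<lambda>x y. of_int (sgn \<tau>) * eval2 Q x y * x ^ T * x ^ m *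
          inverse x ^ 2 * inverse x ^ K * inverse y ^ K"])
       (intro R_repr_mult R_repr_of_int R_repr_emb R_repr_power R_repr_qh R_repr_inverse_qh R_repr_inverse_ah)
  moreover have "qint_sum \<tau> m qh ah = (br (int m * \<tau>) qh * br (int m) qh / (br 1 qh) ^ 2) * c"
  proof -
    define u where "u = qh ^ 2 - 1"
    have u: "u \<noteq> 0" using qh_power_neq_1[of 2] by (simp add: u_def)
    have br1: "br 1 qh = u / qh"
      using br_eq_geom2_poly[of 1] by (simp add: emb_geom2_poly u_def)
    have "(s * (B * u / qh ^ T) * (A * u / qh ^ m) / (u / qh) ^ 2) *
        (s * E * qh ^ T * qh ^ m * inverse qh ^ 2 * inverse qh ^ K * inverse ah ^ K) =
        (s * s) * (A * B * E / (qh * ah) ^ K)" for s A B E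
      using qh_nonzero ah_nonzero u by (simp add: field_simps power_mult_distrib power2_eq_square)
    moreover have "of_int (sgn \<tau>) * of_int (sgn \<tau>) = (1 :: rf)" using tau by (simp add: sgn_if)
    ultimately show ?thesis
      unfolding QK br_mult_eq_sgn_mult br_eq_geom2_poly br1 T_def[symmetric] c_def u_def[symmetric]
      by simp
  qed
  ultimately show ?thesis by blast
qed

theorem lemma4p16:
  fixes \<tau> :: int and m :: nat
  assumes "\<tau> \<noteq> 0" and "1 \<le> m"
  shows "br (int m) qh * br (int m * \<tau>) qh * gf \<tau> m qh ah =
           (\<Sum>d\<in>{d. d dvd m}. \<Sum>\<nu>\<in>partitions (m div d).
              (of_int (mobius d) * (-1) powi (int (m div d) * \<tau>) / of_nat (zee \<nu>)) *
              (\<Prod>i\<in>#\<nu>. br (int m * int i * \<tau>) qh / br (int d * int i) qh) *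
              (\<Prod>i\<in>#\<nu>. br (int d * int i) ah))
       \<and> in_R (br (int m) qh * br (int m * \<tau>) qh * gf \<tau> m qh ah)
       \<and> (\<exists>c. in_R c \<and>
            br (int m) qh * br (int m * \<tau>) qh * gf \<tau> m qh ah =
              (br (int m * \<tau>) qh * br (int m) qh / (br 1 qh) ^ 2) * c)"
proof -
  have eq: "br (int m) qh * br (int m * \<tau>) qh * gf \<tau> m qh ah = qint_sum \<tau> m qh ah"
    unfolding br_mult_gf_eq[OF assms] rhs_eq_qint_sum[OF assms(2)] ..
  show ?thesis
    using br_mult_gf_eq[OF assms] R_repr_imp_in_R[OF R_repr_qint_sum] qint_sum_divisible[OF assms]
    unfolding eq by blast
qed

end
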